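(* Let $W$ be a $\phi$-coordinated $V_{\widehat{\mathfrak{L}^*}}(\ell_{1234},0)$-module. Then $W$ is a restricted $\mathcal{L}^*$-module of level $\ell_{1234}$, on which $T_m(x)$ acts as $Y_W((T^m)_{-1}\mathbf{1},x)$ and $E_m(x)$ acts as $Y_W((E^m)_{-1}\mathbf{1},x)$ for all $m\in\mathbb{Z}$.
   Context: The rank two twisted Heisenberg–Virasoro algebra $\mathcal{L}^*$ has basis $\{t_1^mt_2^n, E_{m,n}: (m,n)\in\mathbb{Z}^2\setminus\{(0,0)\}\}\cup\{K_1,K_2,K_3,K_4\}$, $K_i$ central, with $[t_1^mt_2^n,t_1^rt_2^s]=0$, $[t_1^mt_2^n,E_{r,s}]=(nr-ms)t_1^{m+r}t_2^{n+s}+\delta_{m+r,0}\delta_{n+s,0}(mK_1+nK_2)$, $[E_{m,n},E_{r,s}]=(nr-ms)E_{m+r,n+s}+\delta_{m+r,0}\delta_{n+s,0}(mK_3+nK_4)$ (terms with index $(0,0)$ are interpreted as $0$). Set $T_m(x)=\sum_{n\in\mathbb{Z}}t_1^mt_2^nx^{-n}$ and $E_m(x)=\sum_nE_{m,n}x^{-n}$ (omitting $(0,0)$ terms). An $\mathcal{L}^*$-module $W$ is restricted if $T_m(x),E_m(x)\in\mathrm{Hom}(W,W((x)))$ for all $m$, i.e. for each $w$, $t_1^mt_2^nw=0$ and $E_{m,n}w=0$ for $n$ sufficiently large; it has level $\ell_{1234}$ if $K_i$ acts as $\ell_i\in\mathbb{C}$. $\widehat{\mathfrak{L}^*}$ is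 the Lie algebra with basis $\{T^m\otimes t^n, E^r\otimes t^s:(m,n),(r,s)\in\mathbb{Z}^2\}\cup\{K_1,\dots,K_4\}$, $K_i$ central, $[T^m\otimes t^n,T^r\otimes t^s]=0$, $[T^m\otimes t^n,E^r\otimes t^s]=(nr-ms)T^{m+r}\otimes t^{n+s-1}+m\delta_{m+r,0}\delta_{n+s+1,0}K_1+n\delta_{m+r,0}\delta_{n+s,0}K_2$, $[E^m\otimes t^n,E^r\otimes t^s]=(nr-ms)E^{m+r}\otimes t^{n+s-1}+m\delta_{m+r,0}\delta_{n+s+1,0}K_3+n\delta_{m+r,0}\delta_{n+s,0}K_4$. Write $(T^m)_n=T^m\otimes t^n$, $(E^r)_s=E^r\otimes t^s$. $V_{\widehat{\mathfrak{L}^*}}(\ell_{1234},0)=U(\widehat{\mathfrak{L}^*})\otimes_{U(\widehat{\mathfrak{L}^*}_{\ge0})}\mathbb{C}$, where $\widehat{\mathfrak{L}^*}_{\ge0}$ is spanned by $T^m\otimes t^n,E^r\otimes t^n$ ($n\ge0$) acting as $0$ and $K_i$ acting as $\ell_i$; $\mathbf{1}=1\otimes1$. It is a vertex algebra with vacuum $\mathbf{1}$, $Y((T^m)_{-1}\mathbf{1},x)=\sum_n(T^m)_nx^{-n-1}$, $Y((E^r)_{-1}\mathbf{1},x)=\sum_s(E^r)_sx^{-s-1}$, generated by $\{(T^m)_{-1}\mathbf{1},(E^r)_{-1}\mathbf{1}\}$. A $\phi$-coordinated module ($\phi(x,z)=xe^z$) for a vertex algebra $V$ is a space $W$ with a linear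 map $Y_W(\cdot,x):V\to\mathrm{Hom}(W,W((x)))$ such that $Y_W(\mathbf{1},x)=\mathbf{1}_W$ and for $u,v\in V$ there is $k\in\mathbb{N}$ with $(x_1-x_2)^kY_W(u,x_1)Y_W(v,x_2)\in\mathrm{Hom}(W,W((x_1,x_2)))$ and $(x_2e^z-x_2)^kY_W(Y(u,z)v,x_2)=((x_1-x_2)^kY_W(u,x_1)Y_W(v,x_2))|_{x_1=x_2e^z}$. *)

theory Defs
  imports Complex_Main "HOL-Library.Product_Lexorder"
begin

text \<open>A vertex operator Y(u,x) = sum_n u_n x^(-n-1) is encoded by its modes: Y u n v = u_n v.
Likewise Y_W(v,x) = sum_n v_n x^(-n-1) is encoded by YW v n w = v_n w.\<close>

section \<open>Vertex algebras (Borcherds identity form of the Jacobi identity)\<close>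

definition vertex_algebra ::
  "(complex \<Rightarrow> 'v::ab_group_add \<Rightarrow> 'v) \<Rightarrow> 'v \<Rightarrow> ('v \<Rightarrow> int \<Rightarrow> 'v \<Rightarrow> 'v) \<Rightarrow> bool" where
  "vertex_algebra sc vac Y \<longleftrightarrow>
     vector_space sc \<and>
     (\<forall>n v. Vector_Spaces.linear sc sc (\<lambda>u. Y u n v)) \<and>
     (\<forall>u n. Vector_Spaces.linear sc sc (Y u n)) \<and>
     (\<forall>u v. \<exists>N. \<forall>n\<ge>N. Y u n v = 0) \<and>
     (\<forall>n v. Y vac n v = (if n = -1 then v else 0)) \<and>
     (\<forall>u n. n \<ge> 0 \<longrightarrow> Y u n vac = 0) \<and>
     (\<forall>u. Y u (-1) vac = u) \<and>
     (\<forall>u v w l m n.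
        (\<Sum>i\<in>{i::nat. Y u (l + int i) v \<noteq> 0}.
            sc ((of_int m :: complex) gchoose i) (Y (Y u (l + int i) v) (m + n - int i) w))
        = (\<Sum>i\<in>{i::nat. Y v (n + int i) w \<noteq> 0}.
            sc ((-1) ^ i * ((of_int l :: complex) gchoose i)) (Y u (l + m - int i) (Y v (n + int i) w)))
        - (\<Sum>i\<in>{i::nat. Y u (m + int i) w \<noteq> 0}.
            sc ((-1) ^ i * ((of_int l :: complex) gchoose i) * ((-1) powi l))
               (Y v (l + n - int i) (Y u (m + int i) w))))"

text \<open>T m n is the action of T^m \<otimes> t^n, E m n that of E^m \<otimes> t^n; K_i acts as l_i.\<close>

definition Lhat_module ::
  "(complex \<Rightarrow> 'v::ab_group_add \<Rightarrow> 'v) \<Rightarrow> (int \<Rightarrow> int \<Rightarrow> 'v \<Rightarrow> 'v) \<Rightarrow> (int \<Rightarrow> int \<Rightarrow> 'v \<Rightarrow> 'v)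
   \<Rightarrow> complex \<Rightarrow> complex \<Rightarrow> complex \<Rightarrow> complex \<Rightarrow> bool" where
  "Lhat_module sc T E l1 l2 l3 l4 \<longleftrightarrow>
     (\<forall>m n. Vector_Spaces.linear sc sc (T m n) \<and> Vector_Spaces.linear sc sc (E m n)) \<and>
     (\<forall>m n r s x. T m n (T r s x) - T r s (T m n x) = 0) \<and>
     (\<forall>m n r s x. T m n (E r s x) - E r s (T m n x) =
        sc (of_int (n * r - m * s)) (T (m + r) (n + s - 1) x)
        + sc ((if m + r = 0 \<and> n + s + 1 = 0 then of_int m * l1 else 0)
              + (if m + r = 0 \<and> n + s = 0 then of_int n * l2 else 0)) x) \<and>
     (\<forall>m n r s x. E m n (E r s x) - E r s (E m n x) =
        sc (of_int (n * r - m * s)) (E (m + r) (n + s - 1) x)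
        + sc ((if m + r = 0 \<and> n + s + 1 = 0 then of_int m * l3 else 0)
              + (if m + r = 0 \<and> n + s = 0 then of_int n * l4 else 0)) x)"

text \<open>PBW description of the induced module: the generators of the negative part are
indexed by keys (b,m,n) with n<0 (b = False for T^m \<otimes> t^n, b = True for E^m \<otimes> t^n);
ordered (lexicographically sorted) monomials applied to the vacuum form a basis.\<close>

definition gen_op :: "(int \<Rightarrow> int \<Rightarrow> 'v \<Rightarrow> 'v) \<Rightarrow> (int \<Rightarrow> int \<Rightarrow> 'v \<Rightarrow> 'v) \<Rightarrow> bool \<times> int \<times> int \<Rightarrow> 'v \<Rightarrow> 'v" where
  "gen_op T E k = (case k of (b, m, n) \<Rightarrow> if b then E m n else T m n)"

definition pbw_vec :: "(int \<Rightarrow> int \<Rightarrow> 'v \<Rightarrow> 'v) \<Rightarrow> (int \<Rightarrow> int \<Rightarrow> 'v \<Rightarrow> 'v) \<Rightarrow> 'v \<Rightarrow> (bool \<times> int \<times> int) list \<Rightarrow> 'v" where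
  "pbw_vec T E vac ks = foldr (gen_op T E) ks vac"

definition pbw_index :: "(bool \<times> int \<times> int) list set" where
  "pbw_index = {ks. sorted ks \<and> (\<forall>k\<in>set ks. snd (snd k) < 0)}"

definition induced_from_vacuum ::
  "(complex \<Rightarrow> 'v::ab_group_add \<Rightarrow> 'v) \<Rightarrow> (int \<Rightarrow> int \<Rightarrow> 'v \<Rightarrow> 'v) \<Rightarrow> (int \<Rightarrow> int \<Rightarrow> 'v \<Rightarrow> 'v) \<Rightarrow> 'v \<Rightarrow> bool" where
  "induced_from_vacuum sc T E vac \<longleftrightarrow>
     (\<forall>m n. n \<ge> 0 \<longrightarrow> T m n vac = 0 \<and> E m n vac = 0) \<and>
     inj_on (pbw_vec T E vac) pbw_index \<and>
     \<not> module.dependent sc (pbw_vec T E vac ` pbw_index) \<and>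
     module.span sc (pbw_vec T E vac ` pbw_index) = UNIV"

definition is_VLhat ::
  "(complex \<Rightarrow> 'v::ab_group_add \<Rightarrow> 'v) \<Rightarrow> 'v \<Rightarrow> ('v \<Rightarrow> int \<Rightarrow> 'v \<Rightarrow> 'v)
   \<Rightarrow> (int \<Rightarrow> int \<Rightarrow> 'v \<Rightarrow> 'v) \<Rightarrow> (int \<Rightarrow> int \<Rightarrow> 'v \<Rightarrow> 'v)
   \<Rightarrow> complex \<Rightarrow> complex \<Rightarrow> complex \<Rightarrow> complex \<Rightarrow> bool" where
  "is_VLhat sc vac Y T E l1 l2 l3 l4 \<longleftrightarrow>
     vertex_algebra sc vac Y \<and>
     Lhat_module sc T E l1 l2 l3 l4 \<and>
     induced_from_vacuum sc T E vac \<and>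
     (\<forall>m n. Y (T m (-1) vac) n = T m n) \<and>
     (\<forall>m n. Y (E m (-1) vac) n = E m n)"

section \<open>phi-coordinated modules, phi(x,z) = x e^z\<close>

text \<open>Coefficient of x1^i x2^j in (x1 - x2)^k Y_W(u,x1) Y_W(v,x2) w.\<close>
definition prod_coeff ::
  "(complex \<Rightarrow> 'w::ab_group_add \<Rightarrow> 'w) \<Rightarrow> ('v \<Rightarrow> int \<Rightarrow> 'w \<Rightarrow> 'w) \<Rightarrow> 'v \<Rightarrow> 'v \<Rightarrow> nat \<Rightarrow> 'w \<Rightarrow> int \<Rightarrow> int \<Rightarrow> 'w" where
  "prod_coeff scW YW u v k w i j =
     (\<Sum>p\<in>{0..k}. scW (of_nat (k choose p) * (-1) ^ p)
        (YW u (int k - int p - i - 1) (YW v (int p - j - 1) w)))"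

text \<open>Coefficient of x2^q z^p in ((x1 - x2)^k Y_W(u,x1) Y_W(v,x2) w) evaluated at x1 = x2 e^z
(meaningful when the product lies in W((x1,x2))).\<close>
definition subst_coeff ::
  "(complex \<Rightarrow> 'w::ab_group_add \<Rightarrow> 'w) \<Rightarrow> ('v \<Rightarrow> int \<Rightarrow> 'w \<Rightarrow> 'w) \<Rightarrow> 'v \<Rightarrow> 'v \<Rightarrow> nat \<Rightarrow> 'w \<Rightarrow> int \<Rightarrow> int \<Rightarrow> 'w" where
  "subst_coeff scW YW u v k w q p =
     (if p < 0 then 0 else
      (\<Sum>i\<in>{i. prod_coeff scW YW u v k w i (q - i) \<noteq> 0}.
         scW ((of_int i :: complex) ^ nat p / fact (nat p)) (prod_coeff scW YW u v k w i (q - i))))"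

text \<open>Coefficient of x2^q z^p in (x2 e^z - x2)^k Y_W(Y(u,z)v, x2) w, using
(x2 e^z - x2)^k = x2^k sum_j (k choose j) (-1)^(k-j) e^(j z).\<close>
definition assoc_coeff ::
  "(complex \<Rightarrow> 'w::ab_group_add \<Rightarrow> 'w) \<Rightarrow> ('v::zero \<Rightarrow> int \<Rightarrow> 'v \<Rightarrow> 'v) \<Rightarrow> ('v \<Rightarrow> int \<Rightarrow> 'w \<Rightarrow> 'w)
    \<Rightarrow> 'v \<Rightarrow> 'v \<Rightarrow> nat \<Rightarrow> 'w \<Rightarrow> int \<Rightarrow> int \<Rightarrow> 'w" where
  "assoc_coeff scW Y YW u v k w q p =
     (\<Sum>j\<in>{0..k}. \<Sum>r\<in>{r::nat. Y u (int r - p - 1) v \<noteq> 0}.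
        scW (of_nat (k choose j) * (-1) ^ (k - j) * of_nat j ^ r / fact r)
            (YW (Y u (int r - p - 1) v) (int k - q - 1) w))"

definition phi_coord_module ::
  "(complex \<Rightarrow> 'v::ab_group_add \<Rightarrow> 'v) \<Rightarrow> 'v \<Rightarrow> ('v \<Rightarrow> int \<Rightarrow> 'v \<Rightarrow> 'v)
   \<Rightarrow> (complex \<Rightarrow> 'w::ab_group_add \<Rightarrow> 'w) \<Rightarrow> ('v \<Rightarrow> int \<Rightarrow> 'w \<Rightarrow> 'w) \<Rightarrow> bool" where
  "phi_coord_module scV vac Y scW YW \<longleftrightarrow>
     vector_space scW \<and>
     (\<forall>n w. Vector_Spaces.linear scV scW (\<lambda>v. YW v n w)) \<and>
     (\<forall>v n. Vector_Spaces.linear scW scW (YW v n)) \<and>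
     (\<forall>v w. \<exists>N. \<forall>n\<ge>N. YW v n w = 0) \<and>
     (\<forall>n w. YW vac n w = (if n = -1 then w else 0)) \<and>
     (\<forall>u v. \<exists>k::nat.
        (\<forall>w. \<exists>A B. \<forall>i j. i < A \<or> j < B \<longrightarrow> prod_coeff scW YW u v k w i j = 0) \<and>
        (\<forall>w q p. assoc_coeff scW Y YW u v k w q p = subst_coeff scW YW u v k w q p))"

text \<open>t m n is the action of t_1^m t_2^n, e m n that of E_{m,n}, for (m,n) \<noteq> (0,0)
(values at (0,0) are irrelevant); K_i acts as l_i; terms with index (0,0) are 0.\<close>

definition Lstar_module ::
  "(complex \<Rightarrow> 'w::ab_group_add \<Rightarrow> 'w) \<Rightarrow> (int \<Rightarrow> int \<Rightarrow> 'w \<Rightarrow> 'w) \<Rightarrow> (int \<Rightarrow> int \<Rightarrow> 'w \<Rightarrow> 'w)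
   \<Rightarrow> complex \<Rightarrow> complex \<Rightarrow> complex \<Rightarrow> complex \<Rightarrow> bool" where
  "Lstar_module sc t e l1 l2 l3 l4 \<longleftrightarrow>
     (\<forall>m n. (m, n) \<noteq> (0, 0) \<longrightarrow>
        Vector_Spaces.linear sc sc (t m n) \<and> Vector_Spaces.linear sc sc (e m n)) \<and>
     (\<forall>m n r s x. (m, n) \<noteq> (0, 0) \<longrightarrow> (r, s) \<noteq> (0, 0) \<longrightarrow>
        t m n (t r s x) - t r s (t m n x) = 0) \<and>
     (\<forall>m n r s x. (m, n) \<noteq> (0, 0) \<longrightarrow> (r, s) \<noteq> (0, 0) \<longrightarrow>
        t m n (e r s x) - e r s (t m n x) =
          sc (of_int (n * r - m * s)) (if (m + r, n + s) = (0, 0) then 0 else t (m + r) (n + s) x)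
          + (if (m + r, n + s) = (0, 0) then sc (of_int m * l1 + of_int n * l2) x else 0)) \<and>
     (\<forall>m n r s x. (m, n) \<noteq> (0, 0) \<longrightarrow> (r, s) \<noteq> (0, 0) \<longrightarrow>
        e m n (e r s x) - e r s (e m n x) =
          sc (of_int (n * r - m * s)) (if (m + r, n + s) = (0, 0) then 0 else e (m + r) (n + s) x)
          + (if (m + r, n + s) = (0, 0) then sc (of_int m * l3 + of_int n * l4) x else 0))"

definition Lstar_restricted :: "(int \<Rightarrow> int \<Rightarrow> 'w::zero \<Rightarrow> 'w) \<Rightarrow> (int \<Rightarrow> int \<Rightarrow> 'w \<Rightarrow> 'w) \<Rightarrow> bool" where
  "Lstar_restricted t e \<longleftrightarrow>
     (\<forall>m w. \<exists>N. \<forall>n\<ge>N. (m, n) \<noteq> (0, 0) \<longrightarrow> t m n w = 0 \<and> e m n w = 0)"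

end

theory Submission
  imports Defs "HOL-Computational_Algebra.Polynomial"
begin

text \<open>Every identity is tested against a linear functional \<open>\<phi>\<close> on \<open>W\<close> and a vector \<open>w\<close>,
  so that all series become families of complex coefficients. The \<open>\<phi>\<close>-coordinated
  associativity says that \<open>(x\<^sub>1 - x\<^sub>2)\<^sup>k Y\<^sub>W(u, x\<^sub>1) Y\<^sub>W(v, x\<^sub>2) w\<close> lies in \<open>W((x\<^sub>1, x\<^sub>2))\<close> and becomes
  \<open>(x\<^sub>2 e\<^sup>z - x\<^sub>2)\<^sup>k Y\<^sub>W(Y(u, z) v, x\<^sub>2) w\<close> under \<open>x\<^sub>1 = x\<^sub>2 e\<^sup>z\<close>. The coefficient of \<open>x\<^sub>2\<^sup>q z\<^sup>p\<close> of the
  substituted series is, up to \<open>p!\<close>, the \<open>p\<close>-th power moment of the finitely many coefficients on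
  the diagonal \<open>i + j = q\<close>, and a finitely supported sequence is determined by its moments.
  Hence skew symmetry of \<open>V\<close> yields weak commutativity, and expanding \<open>(x\<^sub>1 - x\<^sub>2)\<^sup>-\<^sup>k\<close> in the two
  domains gives the commutator formula
  \<open>[u\<^sub>n\<^sub>-\<^sub>1, v\<^sub>s\<^sub>-\<^sub>1] = (u\<^sub>0 v)\<^sub>n\<^sub>+\<^sub>s\<^sub>-\<^sub>1 + n (u\<^sub>1 v)\<^sub>n\<^sub>+\<^sub>s\<^sub>-\<^sub>1\<close> whenever \<open>u\<^sub>j v = 0\<close> for \<open>j \<ge> 2\<close>.
  For \<open>u = (T\<^sup>m)\<^sub>-\<^sub>1\<one>\<close> and \<open>v = (E\<^sup>r)\<^sub>-\<^sub>1\<one>\<close> the products \<open>u\<^sub>0 v\<close>, \<open>u\<^sub>1 v\<close> are read off from the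
  bracket of \<open>\<widehat>{L*}\<close>, and the \<open>\<phi>\<close>-coordinated \<open>D\<close>-derivative property
  \<open>Y\<^sub>W(D c, x) = x (d/dx) Y\<^sub>W(c, x)\<close> turns the formula into the bracket of \<open>L*\<close>.\<close>

section \<open>Finite differences\<close>

definition fdiff :: "nat \<Rightarrow> (nat \<Rightarrow> 'a::comm_ring_1) \<Rightarrow> 'a" where
  "fdiff k f = (\<Sum>l\<le>k. of_nat (k choose l) * (-1) ^ (k - l) * f l)"

lemma fdiff_sum: "fdiff k (\<lambda>l. \<Sum>t\<in>A. f t l) = (\<Sum>t\<in>A. fdiff k (f t))"
  unfolding fdiff_def by (simp add: sum_distrib_left sum.swap[of _ A])

lemma fdiff_cmult: "fdiff k (\<lambda>l. c * f l) = c * fdiff k f"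
  unfolding fdiff_def by (simp add: sum_distrib_left mult_ac)

lemma fdiff_diff: "fdiff k (\<lambda>l. f l - g l) = fdiff k f - fdiff k g"
  unfolding fdiff_def by (simp add: sum_subtractf algebra_simps)

lemma fdiff_divide: "fdiff k (\<lambda>l. f l / c) = fdiff k f / (c :: 'a::field)"
  unfolding fdiff_def by (simp add: sum_divide_distrib)

lemma fdiff_cong: "(\<And>l. l \<le> k \<Longrightarrow> f l = g l) \<Longrightarrow> fdiff k f = fdiff k g"
  unfolding fdiff_def by simp

lemma minus_one_power_diff:
  assumes "l \<le> k"
  shows "(-1 :: 'a::comm_ring_1) ^ (k - l) = (-1) ^ k * (-1) ^ l"
proof -
  from assms obtain d where k: "k = l + d" using le_Suc_ex by blast
  have "(-1 :: 'a) ^ l * (-1) ^ l = 1" by (simp flip: power_mult_distrib)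
  moreover have "(-1 :: 'a) ^ k * (-1) ^ l = (-1) ^ d * ((-1) ^ l * (-1) ^ l)"
    unfolding k power_add by (simp only: mult_ac)
  ultimately show ?thesis using k by simp
qed

lemma fdiff_reflect: "fdiff k (\<lambda>l. f (k - l)) = (-1) ^ k * fdiff k f"
proof -
  have "fdiff k (\<lambda>l. f (k - l)) = (\<Sum>l\<le>k. (-1) ^ k * (of_nat (k choose l) * (-1) ^ (k - l) * f l))"
    unfolding fdiff_def
    by (rule sum.reindex_bij_witness[of _ "\<lambda>l. k - l" "\<lambda>l. k - l"])
      (auto simp: minus_one_power_diff binomial_symmetric[symmetric] mult_ac)
  then show ?thesis unfolding fdiff_def by (simp add: sum_distrib_left)
qed

lemma fdiff_Suc: "fdiff (Suc k) f = fdiff k (\<lambda>l. f (Suc l) - f l)"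
proof -
  define g where "g l = of_nat (k choose l) * (-1) ^ (Suc k - l) * f l" for l
  define h where "h l = (if l = 0 then 0 else of_nat (k choose (l - 1)) * (-1) ^ (Suc k - l) * f l)" for l
  have "of_nat (Suc k choose l) * (-1) ^ (Suc k - l) * f l = g l + h l" for l
    unfolding g_def h_def by (cases l) (auto simp: distrib_right)
  then have "fdiff (Suc k) f = (\<Sum>l\<le>Suc k. g l) + (\<Sum>l\<le>Suc k. h l)"
    unfolding fdiff_def by (simp add: sum.distrib)
  also have "(\<Sum>l\<le>Suc k. g l) = - (\<Sum>l\<le>k. of_nat (k choose l) * (-1) ^ (k - l) * f l)"
    unfolding g_def by (simp add: sum.atMost_Suc sum_negf[symmetric] Suc_diff_le binomial_eq_0)
  also have "(\<Sum>l\<le>Suc k. h l) = (\<Sum>l\<le>k. of_nat (k choose l) * (-1) ^ (k - l) * f (Suc l))"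
    unfolding h_def by (subst sum.atMost_Suc_shift) simp
  finally show ?thesis
    unfolding fdiff_def by (simp add: algebra_simps sum_subtractf)
qed

text \<open>\<open>fdiff_pow k r / r!\<close> is the coefficient of \<open>z\<^sup>r\<close> in \<open>(e\<^sup>z - 1)\<^sup>k\<close>.\<close>

definition fdiff_pow :: "nat \<Rightarrow> nat \<Rightarrow> complex" where
  "fdiff_pow k r = fdiff k (\<lambda>l. of_nat l ^ r)"

lemma fdiff_pow_Suc: "fdiff_pow (Suc k) r = (\<Sum>t<r. of_nat (r choose t) * fdiff_pow k t)"
proof -
  have "of_nat (Suc l) ^ r - of_nat l ^ r = (\<Sum>t<r. of_nat (r choose t) * (of_nat l ^ t :: complex))" for l
    using binomial_ring[of "of_nat l :: complex" 1 r] by (simp add: lessThan_Suc_atMost[symmetric] add.commute)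
  then show ?thesis
    unfolding fdiff_pow_def fdiff_Suc by (simp add: fdiff_sum fdiff_cmult)
qed

lemma fdiff_pow_below: "r < k \<Longrightarrow> fdiff_pow k r = 0"
proof (induction k arbitrary: r)
  case 0 then show ?case by simp
next
  case (Suc k) then show ?case by (simp add: fdiff_pow_Suc)
qed

lemma fdiff_pow_self: "fdiff_pow k k = fact k"
proof (induction k)
  case 0 then show ?case by (simp add: fdiff_pow_def fdiff_def)
next
  case (Suc k)
  then show ?case by (simp add: fdiff_pow_Suc lessThan_Suc fdiff_pow_below)
qed

lemma fdiff_pow_Suc_self: "fdiff_pow k (Suc k) = fact (Suc k) * of_nat k / 2"
proof (induction k)
  case 0 then show ?case by (simp add: fdiff_pow_def fdiff_def)
next
  case (Suc k)
  have "2 * (Suc (Suc k) choose k) = Suc (Suc k) * Suc k" for k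
    by (induction k) (simp_all add: binomial_Suc_n)
  then have "of_nat (Suc (Suc k) choose k) = (of_nat (Suc (Suc k)) * of_nat (Suc k) / 2 :: complex)"
    by (metis (mono_tags, lifting) nonzero_mult_div_cancel_left of_nat_mult of_nat_numeral zero_neq_numeral)
  with Suc show ?case
    by (simp add: fdiff_pow_Suc lessThan_Suc fdiff_pow_below fdiff_pow_self binomial_Suc_n field_simps)
qed

lemma power_add_div_fact: "(a + b :: complex) ^ m / fact m = (\<Sum>u\<le>m. b ^ u / fact u * (a ^ (m - u) / fact (m - u)))"
proof -
  have "(a + b) ^ m = (\<Sum>u\<le>m. of_nat (m choose u) * b ^ u * a ^ (m - u))"
    using binomial_ring[of b a m] by (simp add: add.commute)
  then have "(a + b) ^ m / fact m = (\<Sum>u\<le>m. of_nat (m choose u) * b ^ u * a ^ (m - u) / fact m)"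
    by (simp add: sum_divide_distrib)
  also have "\<dots> = (\<Sum>u\<le>m. b ^ u / fact u * (a ^ (m - u) / fact (m - u)))"
    by (intro sum.cong refl) (simp add: binomial_fact field_simps)
  finally show ?thesis .
qed

lemma fdiff_pow_convolution_eq_0:
  fixes e :: "nat \<Rightarrow> complex"
  assumes h: "\<And>p. (\<Sum>r\<le>p. fdiff_pow k r / fact r * e (p - r)) = 0"
  shows "e j = 0"
proof (induction j rule: less_induct)
  case (less j)
  have "0 = (\<Sum>r\<le>j + k. fdiff_pow k r / fact r * e (j + k - r))" using h[of "j + k"] by simp
  also have "\<dots> = (\<Sum>r\<in>{k}. fdiff_pow k r / fact r * e (j + k - r))"
  proof (rule sum.mono_neutral_right)
    show "\<forall>r\<in>{..j + k} - {k}. fdiff_pow k r / fact r * e (j + k - r) = 0"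
    proof
      fix r assume r: "r \<in> {..j + k} - {k}"
      show "fdiff_pow k r / fact r * e (j + k - r) = 0"
      proof (cases "r < k")
        case True then show ?thesis by (simp add: fdiff_pow_below)
      next
        case False
        with r have "j + k - r < j" by auto
        then show ?thesis by (simp add: less.IH)
      qed
    qed
  qed auto
  also have "\<dots> = e j" by (simp add: fdiff_pow_self)
  finally show ?case by simp
qed

lemma fdiff_pow_exp_convolution:
  "(\<Sum>r\<le>p. fdiff_pow k r / fact r * (mu ^ (p - r) / fact (p - r))) = fdiff k (\<lambda>l. (of_nat l + mu) ^ p) / fact p"
proof -
  have "(\<Sum>r\<le>p. fdiff_pow k r / fact r * (mu ^ (p - r) / fact (p - r)))
      = fdiff k (\<lambda>l. \<Sum>r\<le>p. of_nat l ^ r / fact r * (mu ^ (p - r) / fact (p - r)))"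
    unfolding fdiff_pow_def fdiff_def
    by (simp add: sum_distrib_left sum_distrib_right sum_divide_distrib mult_ac sum.swap[of _ "{..k}"])
  also have "\<dots> = fdiff k (\<lambda>l. (of_nat l + mu) ^ p / fact p)"
    by (simp add: power_add_div_fact[of mu "of_nat _" p] add.commute)
  finally show ?thesis
    unfolding fdiff_def by (simp add: sum_divide_distrib)
qed

section \<open>Multiplication by \<open>(x\<^sub>1 - x\<^sub>2)\<^sup>k\<close>\<close>

text \<open>Coefficient of \<open>x\<^sub>1\<^sup>i x\<^sub>2\<^sup>j\<close> in \<open>(x\<^sub>1 - x\<^sub>2)\<^sup>k P(x\<^sub>1, x\<^sub>2)\<close>.\<close>

definition diff_mult :: "nat \<Rightarrow> (int \<Rightarrow> int \<Rightarrow> complex) \<Rightarrow> int \<Rightarrow> int \<Rightarrow> complex" where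
  "diff_mult k P i j = (\<Sum>p\<le>k. of_nat (k choose p) * (-1) ^ p * P (i - int k + int p) (j - int p))"

lemma diff_mult_fdiff: "diff_mult k P i j = fdiff k (\<lambda>l. P (i - int l) (j - int k + int l))"
  unfolding diff_mult_def fdiff_def
  by (rule sum.reindex_bij_witness[of _ "\<lambda>l. k - l" "\<lambda>l. k - l"])
     (auto simp: of_nat_diff binomial_symmetric[symmetric] algebra_simps)

lemma diff_mult_Suc: "diff_mult (Suc k) P i j = diff_mult k P (i - 1) j - diff_mult k P i (j - 1)"
  unfolding diff_mult_fdiff fdiff_Suc fdiff_diff by (simp add: algebra_simps)

lemma diff_mult_eq_0:
  assumes "\<And>i j. j < B \<Longrightarrow> P i j = 0" and "j < B"
  shows "diff_mult k P i j = 0"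
  unfolding diff_mult_def using assms by (intro sum.neutral) auto

text \<open>Multiplying by the expansion of \<open>(x\<^sub>1 - x\<^sub>2)\<^sup>-\<^sup>k\<close> in nonnegative powers of \<open>x\<^sub>2\<close>
  undoes \<open>diff_mult k\<close> on series bounded below in \<open>x\<^sub>2\<close>.\<close>

lemma diff_mult_inverse:
  assumes trunc: "\<And>i j. j < B \<Longrightarrow> P i j = 0" and M: "j - B \<le> int M"
  shows "P i j = (\<Sum>n\<le>M. of_nat ((n + k - 1) choose n) * diff_mult k P (i + int k + int n) (j - int n))"
proof (induction k)
  case 0
  have "(\<Sum>n\<le>M. of_nat ((n - 1) choose n) * diff_mult 0 P (i + int n) (j - int n))
      = (\<Sum>n\<in>{0}. of_nat ((n - 1) choose n) * diff_mult 0 P (i + int n) (j - int n))"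
    by (rule sum.mono_neutral_right) auto
  then show ?case by (simp add: diff_mult_def)
next
  case (Suc k)
  define F where "F = diff_mult k P"
  define c where "c n = of_nat ((n + k - 1) choose n) * F (i + int k + int n) (j - int n)" for n
  define c' where "c' n = (if n = 0 then 0 else of_nat ((n + k - 1) choose (n - 1))
      * F (i + int k + int n) (j - int n))" for n
  have pascal: "of_nat ((n + k) choose n) * F (i + int k + int n) (j - int n) = c n + c' n" for n
    unfolding c_def c'_def by (cases n) (simp_all add: algebra_simps)
  have "(\<Sum>n\<le>M. of_nat ((n + Suc k - 1) choose n) * diff_mult (Suc k) P (i + int (Suc k) + int n) (j - int n))
     = (\<Sum>n\<le>M. of_nat ((n + k) choose n) * F (i + int k + int n) (j - int n))
       - (\<Sum>n\<le>M. of_nat ((n + k) choose n) * F (i + int k + int (Suc n)) (j - int (Suc n)))"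
    by (simp add: diff_mult_Suc F_def[symmetric] sum_subtractf[symmetric] algebra_simps)
  also have "(\<Sum>n\<le>M. of_nat ((n + k) choose n) * F (i + int k + int (Suc n)) (j - int (Suc n)))
      = (\<Sum>n\<le>Suc M. c' n)"
    unfolding c'_def by (subst sum.atMost_Suc_shift) simp
  also have "\<dots> = (\<Sum>n\<le>M. c' n)"
    using diff_mult_eq_0[OF trunc, where j="j - int (Suc M)" and k=k] M by (simp add: sum.atMost_Suc c'_def F_def)
  also have "(\<Sum>n\<le>M. of_nat ((n + k) choose n) * F (i + int k + int n) (j - int n))
      = (\<Sum>n\<le>M. c n) + (\<Sum>n\<le>M. c' n)"
    by (simp add: pascal sum.distrib)
  finally show ?case
    using Suc.IH by (simp add: c_def F_def)
qed

lemma of_int_gchoose_cases: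
  assumes k: "1 \<le> k"
  shows "(of_int (x - i - 1) gchoose (k - 1) :: complex)
     = (if i + int k \<le> x then of_nat (nat (x - i - 1) choose (k - 1))
        else if x \<le> i then - ((-1)^k * of_nat ((nat (i - x) + k - 1) choose (k - 1))) else 0)"
proof (cases "i + int k \<le> x")
  case True
  then have "0 \<le> x - i - 1" using k by linarith
  then have "of_int (x - i - 1) = (of_nat (nat (x - i - 1)) :: complex)" by (metis of_nat_nat)
  then show ?thesis using True by (simp add: binomial_gbinomial)
next
  case F: False
  show ?thesis
  proof (cases "x \<le> i")
    case True
    have "(of_int (x - i - 1) gchoose (k - 1) :: complex)
        = (-1)^(k-1) * ((of_nat (k - 1) - of_int (x - i - 1) - 1) gchoose (k - 1))"
      by (rule gbinomial_negated_upper)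
    also have "(of_nat (k - 1) - of_int (x - i - 1) - 1 :: complex) = of_nat (nat (i - x) + k - 1)"
      using True k by (simp add: of_nat_diff)
    also have "(-1)^(k-1) = - ((-1)^k :: complex)"
      using k by (cases k) auto
    finally show ?thesis using True F by (simp add: binomial_gbinomial)
  next
    case False
    then have "0 \<le> x - i - 1" using F by linarith
    then have eq: "of_int (x - i - 1) = (of_nat (nat (x - i - 1)) :: complex)" by (metis of_nat_nat)
    have lt: "nat (x - i - 1) < k - 1" using F False by linarith
    have "(of_int (x - i - 1) gchoose (k - 1) :: complex) = 0"
      unfolding eq binomial_gbinomial[symmetric] using lt by simp
    then show ?thesis using F False by simp
  qed
qed

lemma sum_int_interval_up: "a \<le> b \<Longrightarrow> (\<Sum>x\<in>{a..b}. f x) = (\<Sum>n\<le>nat (b - a). f (a + int n))"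
  by (rule sum.reindex_bij_witness[of _ "\<lambda>n. a + int n" "\<lambda>x. nat (x - a)"]) auto

lemma diff_mult_inverse_interval:
  assumes k: "1 \<le> k" and trunc: "\<And>i j. j < B \<Longrightarrow> P i j = 0"
    and U: "i + j + int k - B \<le> U" "i + int k \<le> U"
  shows "P i j = (\<Sum>x\<in>{i + int k..U}.
      of_nat (nat (x - i - 1) choose (k - 1)) * diff_mult k P x (i + j + int k - x))"
proof -
  have "P i j = (\<Sum>n\<le>nat (U - (i + int k)).
      of_nat ((n + k - 1) choose n) * diff_mult k P (i + int k + int n) (j - int n))"
    by (rule diff_mult_inverse[where B=B, OF trunc]) (use U in auto)
  also have "\<dots> = (\<Sum>n\<le>nat (U - (i + int k)).
      of_nat (nat ((i + int k + int n) - i - 1) choose (k - 1))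
      * diff_mult k P (i + int k + int n) (i + j + int k - (i + int k + int n)))"
  proof (intro sum.cong refl)
    fix n
    have "(n + k - 1) choose n = (n + k - 1) choose (k - 1)"
      using k by (metis add_diff_assoc add_diff_cancel_left' binomial_symmetric le_add1)
    moreover have "nat ((i + int k + int n) - i - 1) = n + k - 1"
      using k by linarith
    ultimately show "of_nat ((n + k - 1) choose n) * diff_mult k P (i + int k + int n) (j - int n)
      = of_nat (nat ((i + int k + int n) - i - 1) choose (k - 1))
        * diff_mult k P (i + int k + int n) (i + j + int k - (i + int k + int n))"
      by simp
  qed
  also have "\<dots> = (\<Sum>x\<in>{i + int k..U}.
      of_nat (nat (x - i - 1) choose (k - 1)) * diff_mult k P x (i + j + int k - x))"
    by (rule sum_int_interval_up[symmetric]) (use U in linarith)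
  finally show ?thesis .
qed

text \<open>Weak commutativity turns the commutator into a sum against the coefficients of
  \<open>\<iota>\<^sub>x\<^sub>1\<^sub>,\<^sub>x\<^sub>2 (x\<^sub>1 - x\<^sub>2)\<^sup>-\<^sup>k - \<iota>\<^sub>x\<^sub>2\<^sub>,\<^sub>x\<^sub>1 (x\<^sub>1 - x\<^sub>2)\<^sup>-\<^sup>k\<close>, which
  are the binomial coefficients \<open>(x - i - 1) gchoose (k - 1)\<close>.\<close>

lemma commutator_of_local:
  fixes P1 P2 :: "int \<Rightarrow> int \<Rightarrow> complex"
  assumes k: "1 \<le> k"
    and trunc1: "\<And>i j. j < B \<Longrightarrow> P1 i j = 0" and trunc2: "\<And>i j. j < B \<Longrightarrow> P2 i j = 0"
    and local: "\<And>i j. diff_mult k P1 i j = (-1) ^ k * diff_mult k P2 j i"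
    and L: "L \<le> B" "L \<le> i" and U: "i + j + int k - B \<le> U" "i + int k \<le> U"
  shows "P1 i j - P2 j i
    = (\<Sum>x\<in>{L..U}. diff_mult k P1 x (i + j + int k - x) * (of_int (x - i - 1) gchoose (k - 1)))"
proof -
  define F where "F x = diff_mult k P1 x (i + j + int k - x)" for x
  define a where "a x = of_nat (nat (x - i - 1) choose (k - 1)) * F x" for x
  define b where "b x = (-1) ^ k * (of_nat ((nat (i - x) + k - 1) choose (k - 1)) * F x)" for x
  have P1: "P1 i j = (\<Sum>x\<in>{i + int k..U}. a x)"
    unfolding a_def F_def by (rule diff_mult_inverse_interval[OF k trunc1 U])
  have "(\<Sum>x\<in>{L..i}. b x) = (\<Sum>y\<in>{j + int k..i + j + int k - L}.
      of_nat (nat (y - j - 1) choose (k - 1)) * diff_mult k P2 y (j + i + int k - y))"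
  proof (rule sum.reindex_bij_witness[of _ "\<lambda>y. i + j + int k - y" "\<lambda>x. i + j + int k - x"])
    fix x assume "x \<in> {L..i}"
    then have "nat (i + j + int k - x - j - 1) = nat (i - x) + k - 1" using k by auto
    moreover have "diff_mult k P2 (i + j + int k - x) x = (-1) ^ k * F x"
      unfolding F_def local by (simp add: power_mult_distrib[symmetric])
    ultimately show "of_nat (nat (i + j + int k - x - j - 1) choose (k - 1))
        * diff_mult k P2 (i + j + int k - x) (j + i + int k - (i + j + int k - x)) = b x"
      unfolding b_def by (simp add: algebra_simps)
  qed auto
  also have "\<dots> = P2 j i"
    by (rule diff_mult_inverse_interval[OF k trunc2, symmetric]) (use L in auto)
  finally have P2: "P2 j i = (\<Sum>x\<in>{L..i}. b x)" ..
  have "(\<Sum>x\<in>{L..U}. F x * (of_int (x - i - 1) gchoose (k - 1)))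
      = (\<Sum>x\<in>{L..U}. (if i + int k \<le> x then a x else 0) - (if x \<le> i then b x else 0))"
    unfolding of_int_gchoose_cases[OF k] a_def b_def using k by (intro sum.cong refl) (auto simp: algebra_simps)
  also have "\<dots> = (\<Sum>x\<in>{i + int k..U}. a x) - (\<Sum>x\<in>{L..i}. b x)"
  proof -
    have "{x \<in> {L..U}. i + int k \<le> x} = {i + int k..U}" and "{x \<in> {L..U}. x \<le> i} = {L..i}"
      using L U k by auto
    then show ?thesis
      by (simp add: sum_subtractf sum.inter_filter[OF finite_atLeastAtMost_int, symmetric])
  qed
  finally show ?thesis unfolding P1 P2 F_def by simp
qed

section \<open>Power moments\<close>

lemma poly_as_bounded_sum:
  fixes h :: "complex poly"
  assumes "degree h \<le> N"
  shows "poly h x = (\<Sum>t\<le>N. coeff h t * x ^ t)"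
proof -
  have "poly h x = (\<Sum>t\<le>degree h. coeff h t * x ^ t)" by (rule poly_altdef)
  also have "\<dots> = (\<Sum>t\<le>N. coeff h t * x ^ t)"
    using assms by (intro sum.mono_neutral_left) (auto simp: coeff_eq_0)
  finally show ?thesis .
qed

lemma sum_mult_poly:
  fixes h :: "complex poly" and f :: "int \<Rightarrow> complex"
  assumes "degree h \<le> N"
  shows "(\<Sum>i\<in>I. f i * poly h (of_int i)) = (\<Sum>t\<le>N. coeff h t * (\<Sum>i\<in>I. f i * of_int i ^ t))"
  by (simp add: poly_as_bounded_sum[OF assms] sum_distrib_left sum_distrib_right algebra_simps sum.swap[of _ I])

lemma power_moments_zero:
  fixes f :: "int \<Rightarrow> complex"
  assumes I: "finite I" and m: "\<And>p::nat. (\<Sum>i\<in>I. f i * of_int i ^ p) = 0" and i0: "i0 \<in> I"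
  shows "f i0 = 0"
proof -
  define h where "h = (\<Prod>l\<in>I - {i0}. [:- of_int l, 1:] :: complex poly)"
  have poly_h: "poly h x = (\<Prod>l\<in>I - {i0}. x - of_int l)" for x
    unfolding h_def poly_prod by simp
  have "(\<Sum>i\<in>I. f i * poly h (of_int i)) = (\<Sum>t\<le>degree h. coeff h t * (\<Sum>i\<in>I. f i * of_int i ^ t))"
    by (rule sum_mult_poly) simp
  also have "\<dots> = 0" by (simp add: m)
  finally have moment_sum: "(\<Sum>i\<in>I. f i * poly h (of_int i)) = 0" .
  have others: "(\<Sum>i\<in>I - {i0}. f i * poly h (of_int i)) = 0"
  proof (rule sum.neutral, rule ballI)
    fix i assume "i \<in> I - {i0}"
    then have "poly h (of_int i) = 0" unfolding poly_h using I
      by (intro prod_zero) auto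
    then show "f i * poly h (of_int i) = 0" by simp
  qed
  have "(\<Sum>i\<in>I. f i * poly h (of_int i)) = f i0 * poly h (of_int i0)"
    using sum.remove[OF I i0, of "\<lambda>i. f i * poly h (of_int i)"] others by simp
  moreover have "poly h (of_int i0) \<noteq> 0" unfolding poly_h using I by (subst prod_zero_iff) auto
  ultimately show ?thesis using moment_sum by simp
qed

definition root_poly :: "(nat \<Rightarrow> complex) \<Rightarrow> nat \<Rightarrow> complex poly" where
  "root_poly d K = (\<Prod>l<K. [:- d l, 1:])"

lemma root_poly_Suc: "root_poly d (Suc K) = smult (- d K) (root_poly d K) + pCons 0 (root_poly d K)"
  by (simp add: root_poly_def lessThan_Suc algebra_simps)

lemma root_poly_coeff: "(\<forall>n>K. coeff (root_poly d K) n = 0) \<and> coeff (root_poly d K) K = 1 \<and>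
   (K \<ge> 1 \<longrightarrow> coeff (root_poly d K) (K - 1) = - (\<Sum>l<K. d l))"
proof (induction K)
  case 0
  then show ?case by (auto simp: root_poly_def coeff_pCons split: nat.splits)
next
  case (Suc K)
  then have high: "\<And>n. n > K \<Longrightarrow> coeff (root_poly d K) n = 0" and lead: "coeff (root_poly d K) K = 1"
    and sub_lead: "K \<ge> 1 \<Longrightarrow> coeff (root_poly d K) (K - 1) = - (\<Sum>l<K. d l)" by auto
  have high_Suc: "\<forall>n>Suc K. coeff (root_poly d (Suc K)) n = 0"
  proof (intro allI impI)
    fix n assume "n > Suc K"
    then obtain n' where "n = Suc n'" "n' > K" by (cases n) auto
    then show "coeff (root_poly d (Suc K)) n = 0" by (simp add: root_poly_Suc high)
  qed
  have lead_Suc: "coeff (root_poly d (Suc K)) (Suc K) = 1" by (simp add: root_poly_Suc high lead)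
  have sub_lead_Suc: "coeff (root_poly d (Suc K)) K = - (\<Sum>l<Suc K. d l)"
  proof (cases K)
    case 0 then show ?thesis by (simp add: root_poly_Suc root_poly_def)
  next
    case (Suc K')
    then have "coeff (root_poly d (Suc K)) K = - d K * coeff (root_poly d K) K + coeff (root_poly d K) K'" by (simp add: root_poly_Suc)
    then show ?thesis using lead sub_lead Suc by simp
  qed
  show ?case using high_Suc lead_Suc sub_lead_Suc by auto
qed

lemma root_poly_degree: "degree (root_poly d K) \<le> K"
  using root_poly_coeff[of K d] by (intro degree_le) auto

lemma root_poly_eval: "poly (root_poly d K) x = (\<Prod>l<K. x - d l)"
  by (simp add: root_poly_def poly_prod)

lemma gbinomial_root_poly: "((x - c) gchoose K :: complex) = poly (smult (1 / fact K) (root_poly (\<lambda>l. c + of_nat l) K)) x"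
  by (simp add: gbinomial_prod_rev root_poly_eval atLeast0LessThan algebra_simps)

lemma sum_mult_gbinomial:
  fixes f :: "int \<Rightarrow> complex"
  assumes K: "1 \<le> K" and low: "\<And>t. t + 1 < K \<Longrightarrow> (\<Sum>i\<in>I. f i * of_int i ^ t) = 0"
  shows "(\<Sum>i\<in>I. f i * ((of_int i - c) gchoose K))
     = ((\<Sum>i\<in>I. f i * of_int i ^ K) - (\<Sum>l<K. c + of_nat l) * (\<Sum>i\<in>I. f i * of_int i ^ (K - 1))) / fact K"
proof -
  define h where "h = smult (1 / fact K) (root_poly (\<lambda>l. c + of_nat l) K)"
  have degree_h: "degree h \<le> K" unfolding h_def using root_poly_degree[of "\<lambda>l. c + of_nat l" K] by simp
  have "(\<Sum>i\<in>I. f i * ((of_int i - c) gchoose K)) = (\<Sum>i\<in>I. f i * poly h (of_int i))"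
    unfolding h_def gbinomial_root_poly ..
  also have "\<dots> = (\<Sum>t\<le>K. coeff h t * (\<Sum>i\<in>I. f i * of_int i ^ t))" by (rule sum_mult_poly[OF degree_h])
  also have "\<dots> = (\<Sum>t\<in>{K - 1, K}. coeff h t * (\<Sum>i\<in>I. f i * of_int i ^ t))"
    using K by (intro sum.mono_neutral_right) (auto simp: low)
  also have "\<dots> = coeff h (K - 1) * (\<Sum>i\<in>I. f i * of_int i ^ (K - 1)) + coeff h K * (\<Sum>i\<in>I. f i * of_int i ^ K)"
    using K by simp
  also have "coeff h K = 1 / fact K" unfolding h_def using root_poly_coeff[of K "\<lambda>l. c + of_nat l"] by simp
  also have "coeff h (K - 1) = - (\<Sum>l<K. c + of_nat l) / fact K"
    unfolding h_def using root_poly_coeff[of K "\<lambda>l. c + of_nat l"] K by simp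
  finally show ?thesis by (simp add: field_simps)
qed

section \<open>Exponential twists\<close>

text \<open>Coefficient of \<open>z\<^sup>p\<close> in \<open>e\<^sup>\<lambda>\<^sup>z \<Sum>\<^sub>n X n z\<^sup>-\<^sup>n\<^sup>-\<^sup>1\<close>, for \<open>X\<close> vanishing at large arguments.\<close>

definition exp_coeff :: "(int \<Rightarrow> complex) \<Rightarrow> complex \<Rightarrow> int \<Rightarrow> complex" where
  "exp_coeff X lam p = (\<Sum>r\<in>{r::nat. X (int r - p - 1) \<noteq> 0}. lam ^ r / fact r * X (int r - p - 1))"

lemma exp_coeff_bounded:
  assumes N: "\<And>n. N \<le> n \<Longrightarrow> X n = 0" and R: "N + p \<le> int R"
  shows "exp_coeff X lam p = (\<Sum>r\<le>R. lam ^ r / fact r * X (int r - p - 1))"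
  unfolding exp_coeff_def
proof (rule sum.mono_neutral_left)
  show "{r. X (int r - p - 1) \<noteq> 0} \<subseteq> {..R}"
  proof
    fix r assume "r \<in> {r. X (int r - p - 1) \<noteq> 0}"
    then have "\<not> N \<le> int r - p - 1" using N by auto
    then show "r \<in> {..R}" using R by auto
  qed
qed auto

lemma exp_convolution:
  fixes Z :: "nat \<Rightarrow> complex"
  assumes Z: "\<And>m. R < m \<Longrightarrow> Z m = 0"
  shows "(\<Sum>r\<le>R. \<Sum>j\<le>R. a ^ r / fact r * (b ^ j / fact j) * Z (r + j)) = (\<Sum>m\<le>R. (a + b) ^ m / fact m * Z m)"
proof -
  define g where "g r j = a ^ r / fact r * (b ^ j / fact j) * Z (r + j)" for r j
  have "(\<Sum>r\<le>R. \<Sum>j\<le>R. g r j) = (\<Sum>(r, j)\<in>{..R} \<times> {..R}. g r j)" by (rule sum.cartesian_product)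
  also have "\<dots> = (\<Sum>(r, j)\<in>{(r, j). r + j \<le> R}. g r j)"
    by (rule sum.mono_neutral_right) (auto simp: g_def, metis Z not_le)
  also have "\<dots> = (\<Sum>m\<le>R. \<Sum>r\<le>m. g r (m - r))" by (rule sum.triangle_reindex_eq)
  also have "\<dots> = (\<Sum>m\<le>R. (a + b) ^ m / fact m * Z m)"
  proof (intro sum.cong refl)
    fix m
    have "(\<Sum>r\<le>m. g r (m - r)) = (\<Sum>r\<le>m. a ^ r / fact r * (b ^ (m - r) / fact (m - r))) * Z m"
      unfolding sum_distrib_right by (intro sum.cong refl) (auto simp: g_def)
    also have "(\<Sum>r\<le>m. a ^ r / fact r * (b ^ (m - r) / fact (m - r))) = (b + a) ^ m / fact m"
      by (rule power_add_div_fact[symmetric])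
    also have "b + a = a + b" by simp
    finally show "(\<Sum>r\<le>m. g r (m - r)) = (a + b) ^ m / fact m * Z m" .
  qed
  finally show ?thesis unfolding g_def .
qed

lemma exp_coeff_add:
  assumes N: "\<And>n. N \<le> n \<Longrightarrow> X n = 0" and U: "N + p \<le> int U"
  shows "exp_coeff X (lam + mu) p = (\<Sum>u\<le>U. mu ^ u / fact u * exp_coeff X lam (p - int u))"
proof -
  have "(\<Sum>u\<le>U. mu ^ u / fact u * exp_coeff X lam (p - int u))
      = (\<Sum>u\<le>U. \<Sum>r\<le>U. mu ^ u / fact u * (lam ^ r / fact r) * X (int (u + r) - p - 1))"
  proof (intro sum.cong refl)
    fix u
    have "exp_coeff X lam (p - int u) = (\<Sum>r\<le>U. lam ^ r / fact r * X (int r - (p - int u) - 1))"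
      by (rule exp_coeff_bounded[OF N]) (use U in auto)
    then show "mu ^ u / fact u * exp_coeff X lam (p - int u)
        = (\<Sum>r\<le>U. mu ^ u / fact u * (lam ^ r / fact r) * X (int (u + r) - p - 1))"
      by (simp add: sum_distrib_left algebra_simps)
  qed
  also have "\<dots> = (\<Sum>m\<le>U. (mu + lam) ^ m / fact m * X (int m - p - 1))"
    by (rule exp_convolution) (use N U in auto)
  also have "\<dots> = exp_coeff X (lam + mu) p"
    by (simp add: exp_coeff_bounded[OF N U] add.commute)
  finally show ?thesis ..
qed

lemma minus_one_powi: "(-1::complex) powi z = (if even z then 1 else -1)"
  by (cases "even z") auto

text \<open>The hypothesis \<open>skew\<close> is skew symmetry \<open>Y(a, z) b = e\<^sup>z\<^sup>D Y(b, -z) a\<close> as it appears in the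
  coefficients \<open>\<phi>((a\<^sub>n b)\<^sub>s w)\<close>, with \<open>e\<^sup>z\<^sup>D\<close> acting through the \<open>D\<close>-derivative property.\<close>

lemma exp_coeff_skew:
  fixes X1 X2 :: "int \<Rightarrow> complex"
  assumes N1: "\<And>n. N \<le> n \<Longrightarrow> X1 n = 0" and N2: "\<And>n. N \<le> n \<Longrightarrow> X2 n = 0"
    and skew: "\<And>n J. N \<le> n + int J \<Longrightarrow> X1 n = - ((-1) powi n) * (\<Sum>j\<le>J. c ^ j / fact j * X2 (n + int j))"
  shows "exp_coeff X1 lam p = (-1) powi p * exp_coeff X2 (c - lam) p"
proof -
  define R where "R = nat (\<bar>N\<bar> + \<bar>p\<bar> + 1)"
  have R1: "N + p \<le> int R" unfolding R_def by linarith
  have "exp_coeff X1 lam p = (\<Sum>r\<le>R. lam ^ r / fact r * X1 (int r - p - 1))"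
    by (rule exp_coeff_bounded[OF N1 R1])
  also have "\<dots> = (\<Sum>r\<le>R. (-1) powi p * (\<Sum>j\<le>R. (- lam) ^ r / fact r * (c ^ j / fact j) * X2 (int r - p - 1 + int j)))"
  proof (intro sum.cong refl)
    fix r
    have X1_r: "X1 (int r - p - 1) = - ((-1) powi (int r - p - 1)) * (\<Sum>j\<le>R. c ^ j / fact j * X2 (int r - p - 1 + int j))"
      by (rule skew[of "int r - p - 1" R]) (unfold R_def, linarith)
    have sign: "- ((-1::complex) powi (int r - p - 1)) * lam ^ r = (-1) powi p * (- lam) ^ r"
    proof -
      have "(- lam) ^ r = (-1) ^ r * lam ^ r" by (rule power_minus)
      then show ?thesis by (auto simp: minus_one_powi minus_one_power_iff even_add)
    qed
    have "lam ^ r / fact r * X1 (int r - p - 1) = (- ((-1) powi (int r - p - 1)) * lam ^ r) / fact r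
        * (\<Sum>j\<le>R. c ^ j / fact j * X2 (int r - p - 1 + int j))"
      unfolding X1_r by (simp add: field_simps)
    also have "\<dots> = ((-1) powi p * (- lam) ^ r) / fact r * (\<Sum>j\<le>R. c ^ j / fact j * X2 (int r - p - 1 + int j))"
      unfolding sign ..
    finally show "lam ^ r / fact r * X1 (int r - p - 1)
        = (-1) powi p * (\<Sum>j\<le>R. (- lam) ^ r / fact r * (c ^ j / fact j) * X2 (int r - p - 1 + int j))"
      by (simp add: sum_distrib_left mult_ac)
  qed
  also have "\<dots> = (-1) powi p * (\<Sum>r\<le>R. \<Sum>j\<le>R. (- lam) ^ r / fact r * (c ^ j / fact j) * X2 (int (r + j) - p - 1))"
    by (simp add: sum_distrib_left algebra_simps)
  also have "(\<Sum>r\<le>R. \<Sum>j\<le>R. (- lam) ^ r / fact r * (c ^ j / fact j) * X2 (int (r + j) - p - 1))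
      = (\<Sum>m\<le>R. (- lam + c) ^ m / fact m * X2 (int m - p - 1))"
    by (rule exp_convolution[where Z="\<lambda>m. X2 (int m - p - 1)"]) (use R1 N2 in auto)
  also have "\<dots> = exp_coeff X2 (c - lam) p"
  proof -
    have "- lam + c = c - lam" by simp
    then show ?thesis by (simp only: exp_coeff_bounded[OF N2 R1])
  qed
  finally show ?thesis .
qed

section \<open>Associativity for coefficient families\<close>

text \<open>For a family \<open>F i j\<close> of coefficients of \<open>x\<^sub>1\<^sup>i x\<^sub>2\<^sup>j\<close>, \<open>moment F q p\<close> is \<open>p!\<close> times the
  coefficient of \<open>x\<^sub>2\<^sup>q z\<^sup>p\<close> in \<open>F(x\<^sub>2 e\<^sup>z, x\<^sub>2)\<close>. For a family \<open>X s n\<close> of coefficients of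
  \<open>x\<^sub>2\<^sup>-\<^sup>s\<^sup>-\<^sup>1 z\<^sup>-\<^sup>n\<^sup>-\<^sup>1\<close>, \<open>assoc_series k X q p\<close> is the coefficient of \<open>x\<^sub>2\<^sup>q z\<^sup>p\<close> in
  \<open>(x\<^sub>2 e\<^sup>z - x\<^sub>2)\<^sup>k X(x\<^sub>2, z)\<close>. \<open>phi_assoc\<close> is the associativity condition of \<open>phi_coord_module\<close>
  in these terms. The sum in \<open>moment\<close> is over the support of the diagonal, so it means
  something only when that support is finite, as it is under \<open>phi_assoc\<close>.\<close>

definition moment :: "(int \<Rightarrow> int \<Rightarrow> complex) \<Rightarrow> int \<Rightarrow> nat \<Rightarrow> complex" where
  "moment F q p = (\<Sum>i\<in>{i. F i (q - i) \<noteq> 0}. F i (q - i) * of_int i ^ p)"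

definition assoc_series :: "nat \<Rightarrow> (int \<Rightarrow> int \<Rightarrow> complex) \<Rightarrow> int \<Rightarrow> int \<Rightarrow> complex" where
  "assoc_series k X q p = fdiff k (\<lambda>l. exp_coeff (X (int k - q - 1)) (of_nat l) p)"

definition phi_assoc :: "nat \<Rightarrow> (int \<Rightarrow> int \<Rightarrow> complex) \<Rightarrow> (int \<Rightarrow> int \<Rightarrow> complex) \<Rightarrow> bool" where
  "phi_assoc k P X \<longleftrightarrow> (\<exists>A. \<forall>i j. i < A \<or> j < A \<longrightarrow> diff_mult k P i j = 0)
     \<and> (\<forall>q p. moment (diff_mult k P) q p = fact p * assoc_series k X q (int p))
     \<and> (\<forall>q p. p < 0 \<longrightarrow> assoc_series k X q p = 0)"

lemma moment_interval:
  assumes A: "\<And>i j. i < A \<or> j < A \<Longrightarrow> F i j = 0" and "L \<le> A" "q - A \<le> U"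
  shows "moment F q p = (\<Sum>i\<in>{L..U}. F i (q - i) * of_int i ^ p)"
  unfolding moment_def
proof (rule sum.mono_neutral_left)
  show "{i. F i (q - i) \<noteq> 0} \<subseteq> {L..U}"
  proof
    fix i assume "i \<in> {i. F i (q - i) \<noteq> 0}"
    then have "\<not> (i < A \<or> q - i < A)" using A by blast
    then show "i \<in> {L..U}" using assms by auto
  qed
qed auto

lemma assoc_series_fdiff_pow:
  assumes N: "\<And>s n. N \<le> n \<Longrightarrow> X s n = 0" and R: "N + t \<le> int R"
  shows "assoc_series k X q t = (\<Sum>r\<le>R. fdiff_pow k r / fact r * X (int k - q - 1) (int r - t - 1))"
proof -
  have "assoc_series k X q t = (\<Sum>l\<le>k. of_nat (k choose l) * (-1)^(k - l) *
      (\<Sum>r\<le>R. (of_nat l) ^ r / fact r * X (int k - q - 1) (int r - t - 1)))"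
    unfolding assoc_series_def fdiff_def by (intro sum.cong refl, subst exp_coeff_bounded[where N=N]) (use N R in auto)
  also have "\<dots> = (\<Sum>r\<le>R. fdiff_pow k r / fact r * X (int k - q - 1) (int r - t - 1))"
    unfolding fdiff_pow_def fdiff_def by (simp add: sum_distrib_left sum_distrib_right sum_divide_distrib algebra_simps sum.swap[of _ "{..k}"])
  finally show ?thesis .
qed

lemma assoc_series_Suc:
  assumes N: "\<And>s n. N \<le> n \<Longrightarrow> X s n = 0" and U: "N + p \<le> int U"
  shows "assoc_series (Suc k) X q p = (\<Sum>u\<in>{1..U}. assoc_series k X (q - 1) (p - int u) / fact u)"
proof -
  define s where "s = int k - q"
  have "exp_coeff (X s) (of_nat (Suc l)) p - exp_coeff (X s) (of_nat l) p
      = (\<Sum>u\<in>{1..U}. exp_coeff (X s) (of_nat l) (p - int u) / fact u)" for l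
  proof -
    have "exp_coeff (X s) (of_nat l + 1) p = (\<Sum>u\<le>U. 1 ^ u / fact u * exp_coeff (X s) (of_nat l) (p - int u))"
      by (rule exp_coeff_add[OF N U])
    also have "{..U} = insert 0 {1..U}" by auto
    finally show ?thesis by (simp add: add.commute)
  qed
  then show ?thesis
    unfolding assoc_series_def fdiff_Suc by (simp add: s_def fdiff_sum fdiff_divide)
qed

lemma moment_diff_mult_Suc:
  assumes A: "\<And>i j. i < A \<or> j < A \<Longrightarrow> diff_mult k P i j = 0"
  shows "moment (diff_mult (Suc k) P) q p = (\<Sum>t<p. of_nat (p choose t) * moment (diff_mult k P) (q - 1) t)"
proof -
  define F where "F = diff_mult k P"
  have A': "diff_mult (Suc k) P i j = 0" if "i < A \<or> j < A" for i j
    using that A by (auto simp: diff_mult_Suc)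
  have "moment (diff_mult (Suc k) P) q p = (\<Sum>i\<in>{A..q - A + 1}. diff_mult (Suc k) P i (q - i) * of_int i ^ p)"
    by (rule moment_interval[OF A']) auto
  also have "\<dots> = (\<Sum>i\<in>{A..q - A + 1}. F (i - 1) (q - i) * of_int i ^ p)
      - (\<Sum>i\<in>{A..q - A + 1}. F i (q - 1 - i) * of_int i ^ p)"
    by (simp add: diff_mult_Suc F_def sum_subtractf[symmetric] algebra_simps)
  also have "(\<Sum>i\<in>{A..q - A + 1}. F (i - 1) (q - i) * of_int i ^ p)
      = (\<Sum>i\<in>{A - 1..q - A}. F i (q - 1 - i) * (of_int i + 1) ^ p)"
    by (rule sum.reindex_bij_witness[of _ "\<lambda>i. i + 1" "\<lambda>i. i - 1"]) (auto simp: algebra_simps)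
  also have "\<dots> = (\<Sum>t\<le>p. of_nat (p choose t) * (\<Sum>i\<in>{A - 1..q - A}. F i (q - 1 - i) * of_int i ^ t))"
    using binomial_ring[of "of_int _ :: complex" 1 p]
    by (simp add: sum_distrib_left sum_distrib_right algebra_simps sum.swap[of _ "{A - 1..q - A}"])
  also have "\<dots> = (\<Sum>t\<le>p. of_nat (p choose t) * moment F (q - 1) t)"
    by (intro sum.cong refl, subst moment_interval[where A=A]) (use A in \<open>auto simp: F_def\<close>)
  also have "(\<Sum>i\<in>{A..q - A + 1}. F i (q - 1 - i) * of_int i ^ p) = moment F (q - 1) p"
    by (subst moment_interval[where A=A]) (use A in \<open>auto simp: F_def\<close>)
  finally show ?thesis
    by (simp add: F_def lessThan_Suc_atMost[symmetric])
qed

lemma sum_rev_convolution: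
  fixes g :: "int \<Rightarrow> complex"
  assumes neg: "\<And>t. t < 0 \<Longrightarrow> g t = 0" and U: "p \<le> U"
  shows "fact p * (\<Sum>u\<in>{1..U}. g (int p - int u) / fact u) = (\<Sum>t<p. of_nat (p choose t) * (fact t * g (int t)))"
proof -
  have "(\<Sum>u\<in>{1..U}. g (int p - int u) / fact u) = (\<Sum>u\<in>{1..p}. g (int p - int u) / fact u)"
    using U by (intro sum.mono_neutral_right) (auto simp: neg)
  also have "\<dots> = (\<Sum>t<p. g (int t) / fact (p - t))"
    by (rule sum.reindex_bij_witness[of _ "\<lambda>t. p - t" "\<lambda>u. p - u"]) (auto simp: of_nat_diff)
  finally have "fact p * (\<Sum>u\<in>{1..U}. g (int p - int u) / fact u) = (\<Sum>t<p. fact p / fact (p - t) * g (int t))"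
    by (simp add: sum_distrib_left)
  also have "\<dots> = (\<Sum>t<p. of_nat (p choose t) * (fact t * g (int t)))"
    by (intro sum.cong refl) (simp add: binomial_fact field_simps)
  finally show ?thesis .
qed

lemma phi_assoc_Suc:
  assumes N: "\<And>s n. N \<le> n \<Longrightarrow> X s n = 0" and assoc: "phi_assoc k P X"
  shows "phi_assoc (Suc k) P X"
proof -
  obtain A where A: "\<And>i j. i < A \<or> j < A \<Longrightarrow> diff_mult k P i j = 0"
    and moment: "\<And>q p. moment (diff_mult k P) q p = fact p * assoc_series k X q (int p)"
    and neg: "\<And>q p. p < 0 \<Longrightarrow> assoc_series k X q p = 0"
    using assoc unfolding phi_assoc_def by blast
  have "diff_mult (Suc k) P i j = 0" if "i < A \<or> j < A" for i j
    using that A by (auto simp: diff_mult_Suc)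
  moreover have "moment (diff_mult (Suc k) P) q p = fact p * assoc_series (Suc k) X q (int p)" for q p
  proof -
    have "moment (diff_mult (Suc k) P) q p = (\<Sum>t<p. of_nat (p choose t) * (fact t * assoc_series k X (q - 1) (int t)))"
      by (simp add: moment_diff_mult_Suc[OF A] moment)
    also have "\<dots> = fact p * (\<Sum>u\<in>{1..nat \<bar>N\<bar> + p}. assoc_series k X (q - 1) (int p - int u) / fact u)"
      by (rule sum_rev_convolution[symmetric]) (auto simp: neg)
    also have "\<dots> = fact p * assoc_series (Suc k) X q (int p)"
      by (subst assoc_series_Suc[OF N]) auto
    finally show ?thesis .
  qed
  moreover have "assoc_series (Suc k) X q p = 0" if "p < 0" for q p
    using that by (subst assoc_series_Suc[OF N, where U="nat \<bar>N\<bar>"]) (auto simp: neg)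
  ultimately show ?thesis unfolding phi_assoc_def by blast
qed

lemma moment_swap:
  assumes A: "\<And>i j. i < A \<or> j < A \<Longrightarrow> F i j = 0"
  shows "moment (\<lambda>i j. F j i) q p
    = (\<Sum>t\<le>p. of_nat (p choose t) * of_int q ^ (p - t) * (-1) ^ t * moment F q t)"
proof -
  have "moment (\<lambda>i j. F j i) q p = (\<Sum>x\<in>{A..q - A}. F (q - x) x * of_int x ^ p)"
    by (rule moment_interval) (use A in auto)
  also have "\<dots> = (\<Sum>y\<in>{A..q - A}. F y (q - y) * of_int (q - y) ^ p)"
    by (rule sum.reindex_bij_witness[of _ "\<lambda>y. q - y" "\<lambda>x. q - x"]) auto
  also have "\<dots> = (\<Sum>y\<in>{A..q - A}. \<Sum>t\<le>p.
      of_nat (p choose t) * of_int q ^ (p - t) * (-1) ^ t * (F y (q - y) * of_int y ^ t))"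
  proof (intro sum.cong refl)
    fix y
    have "(of_int (q - y) :: complex) ^ p = (- of_int y + of_int q) ^ p" by simp
    also have "\<dots> = (\<Sum>t\<le>p. of_nat (p choose t) * (- of_int y) ^ t * of_int q ^ (p - t))"
      by (rule binomial_ring)
    finally show "F y (q - y) * of_int (q - y) ^ p = (\<Sum>t\<le>p.
        of_nat (p choose t) * of_int q ^ (p - t) * (-1) ^ t * (F y (q - y) * of_int y ^ t))"
      by (simp add: sum_distrib_left power_minus[of "of_int y"] mult_ac)
  qed
  also have "\<dots> = (\<Sum>t\<le>p. of_nat (p choose t) * of_int q ^ (p - t) * (-1) ^ t
      * (\<Sum>y\<in>{A..q - A}. F y (q - y) * of_int y ^ t))"
    by (subst sum.swap) (simp add: sum_distrib_left)
  also have "\<dots> = (\<Sum>t\<le>p. of_nat (p choose t) * of_int q ^ (p - t) * (-1) ^ t * moment F q t)"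
    by (simp add: moment_interval[OF A order_refl order_refl])
  finally show ?thesis .
qed

lemma assoc_series_skew:
  fixes X1 X2 :: "int \<Rightarrow> int \<Rightarrow> complex"
  assumes N1: "\<And>s n. N \<le> n \<Longrightarrow> X1 s n = 0" and N2: "\<And>s n. N \<le> n \<Longrightarrow> X2 s n = 0"
    and skew: "\<And>s n J. N \<le> n + int J \<Longrightarrow>
        X1 s n = - ((-1) powi n) * (\<Sum>j\<le>J. (of_int s + 1) ^ j / fact j * X2 s (n + int j))"
    and neg2: "\<And>q p. p < 0 \<Longrightarrow> assoc_series k X2 q p = 0"
  shows "assoc_series k X1 q (int p)
    = (-1) ^ p * (-1) ^ k * (\<Sum>u\<le>p. (- of_int q) ^ u / fact u * assoc_series k X2 q (int p - int u))"
proof -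
  define s where "s = int k - q - 1"
  define U where "U = nat \<bar>N\<bar> + p"
  have U: "N + int p \<le> int U" "p \<le> U" unfolding U_def by linarith+
  have "assoc_series k X1 q (int p) = fdiff k (\<lambda>l. (-1) ^ p * exp_coeff (X2 s) (of_int s + 1 - of_nat l) (int p))"
    unfolding assoc_series_def s_def[symmetric]
    by (intro fdiff_cong) (simp add: exp_coeff_skew[OF N1 N2 skew])
  also have "\<dots> = (-1) ^ p * fdiff k (\<lambda>l. exp_coeff (X2 s) (of_nat (k - l) - of_int q) (int p))"
    unfolding fdiff_cmult by (intro arg_cong[where f="(*) _"] fdiff_cong) (simp add: s_def of_nat_diff algebra_simps)
  also have "\<dots> = (-1) ^ p * (-1) ^ k * fdiff k (\<lambda>l. exp_coeff (X2 s) (of_nat l - of_int q) (int p))"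
    by (simp add: fdiff_reflect[where f="\<lambda>l. exp_coeff (X2 s) (of_nat l - of_int q) (int p)"])
  also have "\<dots> = (-1) ^ p * (-1) ^ k
      * fdiff k (\<lambda>l. \<Sum>u\<le>U. (- of_int q) ^ u / fact u * exp_coeff (X2 s) (of_nat l) (int p - int u))"
    by (simp only: diff_conv_add_uminus exp_coeff_add[OF N2 U(1)])
  also have "\<dots> = (-1) ^ p * (-1) ^ k * (\<Sum>u\<le>U. (- of_int q) ^ u / fact u * assoc_series k X2 q (int p - int u))"
    unfolding assoc_series_def s_def by (simp only: fdiff_sum fdiff_cmult)
  also have "(\<Sum>u\<le>U. (- of_int q) ^ u / fact u * assoc_series k X2 q (int p - int u))
      = (\<Sum>u\<le>p. (- of_int q) ^ u / fact u * assoc_series k X2 q (int p - int u))"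
    using U by (intro sum.mono_neutral_right) (auto simp: neg2)
  finally show ?thesis .
qed

lemma phi_assoc_moment_skew:
  fixes P1 P2 X1 X2 :: "int \<Rightarrow> int \<Rightarrow> complex"
  assumes N1: "\<And>s n. N \<le> n \<Longrightarrow> X1 s n = 0" and N2: "\<And>s n. N \<le> n \<Longrightarrow> X2 s n = 0"
    and skew: "\<And>s n J. N \<le> n + int J \<Longrightarrow>
        X1 s n = - ((-1) powi n) * (\<Sum>j\<le>J. (of_int s + 1) ^ j / fact j * X2 s (n + int j))"
    and assoc1: "phi_assoc k P1 X1" and assoc2: "phi_assoc k P2 X2"
  shows "moment (diff_mult k P1) q p = (-1) ^ k * moment (\<lambda>i j. diff_mult k P2 j i) q p"
proof -
  have moment1: "\<And>q p. moment (diff_mult k P1) q p = fact p * assoc_series k X1 q (int p)"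
    using assoc1 unfolding phi_assoc_def by blast
  obtain A where A: "\<And>i j. i < A \<or> j < A \<Longrightarrow> diff_mult k P2 i j = 0"
    and moment2: "\<And>q p. moment (diff_mult k P2) q p = fact p * assoc_series k X2 q (int p)"
    and neg2: "\<And>q p. p < 0 \<Longrightarrow> assoc_series k X2 q p = 0"
    using assoc2 unfolding phi_assoc_def by blast
  have "moment (diff_mult k P1) q p = (-1) ^ k * (\<Sum>u\<le>p.
      fact p * ((-1) ^ p * (- of_int q) ^ u / fact u) * assoc_series k X2 q (int p - int u))"
    by (simp add: moment1 assoc_series_skew[OF N1 N2 skew neg2] sum_distrib_left algebra_simps)
  also have "(\<Sum>u\<le>p. fact p * ((-1) ^ p * (- of_int q) ^ u / fact u) * assoc_series k X2 q (int p - int u))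
      = (\<Sum>t\<le>p. of_nat (p choose t) * of_int q ^ (p - t) * (-1) ^ t * moment (diff_mult k P2) q t)"
  proof (rule sum.reindex_bij_witness[of _ "\<lambda>t. p - t" "\<lambda>t. p - t"])
    fix u assume "u \<in> {..p}"
    then have u: "u \<le> p" by simp
    have binomial: "of_nat (p choose (p - u)) * fact (p - u) = (fact p / fact u :: complex)"
      using u by (simp add: binomial_fact field_simps)
    have sign: "of_int q ^ (p - (p - u)) * (-1) ^ (p - u) = ((-1) ^ p * (- of_int q) ^ u :: complex)"
      using u by (simp add: minus_one_power_diff power_minus[of "of_int q"] mult_ac)
    have "of_nat (p choose (p - u)) * of_int q ^ (p - (p - u)) * (-1) ^ (p - u) * moment (diff_mult k P2) q (p - u)
        = (of_nat (p choose (p - u)) * fact (p - u)) * (of_int q ^ (p - (p - u)) * (-1) ^ (p - u))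
          * assoc_series k X2 q (int (p - u))"
      by (simp add: moment2)
    also have "\<dots> = fact p * ((-1) ^ p * (- of_int q) ^ u / fact u) * assoc_series k X2 q (int p - int u)"
      unfolding binomial sign using u by (simp add: of_nat_diff)
    finally show "of_nat (p choose (p - u)) * of_int q ^ (p - (p - u)) * (-1) ^ (p - u)
        * moment (diff_mult k P2) q (p - u)
      = fact p * ((-1) ^ p * (- of_int q) ^ u / fact u) * assoc_series k X2 q (int p - int u)" .
  qed auto
  also have "\<dots> = moment (\<lambda>i j. diff_mult k P2 j i) q p"
    by (rule moment_swap[OF A, symmetric])
  finally show ?thesis .
qed

text \<open>Locality: the moments along each diagonal \<open>i + j = q\<close> determine the finitely
  many nonzero coefficients there.\<close>

lemma phi_assoc_locality:
  fixes P1 P2 X1 X2 :: "int \<Rightarrow> int \<Rightarrow> complex"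
  assumes N1: "\<And>s n. N \<le> n \<Longrightarrow> X1 s n = 0" and N2: "\<And>s n. N \<le> n \<Longrightarrow> X2 s n = 0"
    and skew: "\<And>s n J. N \<le> n + int J \<Longrightarrow>
        X1 s n = - ((-1) powi n) * (\<Sum>j\<le>J. (of_int s + 1) ^ j / fact j * X2 s (n + int j))"
    and assoc1: "phi_assoc k P1 X1" and assoc2: "phi_assoc k P2 X2"
  shows "diff_mult k P1 i j = (-1) ^ k * diff_mult k P2 j i"
proof -
  obtain A1 where A1: "\<And>i j. i < A1 \<or> j < A1 \<Longrightarrow> diff_mult k P1 i j = 0"
    using assoc1 unfolding phi_assoc_def by blast
  obtain A2 where A2: "\<And>i j. i < A2 \<or> j < A2 \<Longrightarrow> diff_mult k P2 i j = 0"
    using assoc2 unfolding phi_assoc_def by blast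
  define q L where "q = i + j" and "L = min A1 A2"
  define D where "D x = diff_mult k P1 x (q - x) - (-1) ^ k * diff_mult k P2 (q - x) x" for x
  have "D x = 0" if "x \<in> {L..q - L}" for x
  proof (rule power_moments_zero[where I="{L..q - L}", OF _ _ that])
    fix p :: nat
    have "moment (diff_mult k P1) q p = (\<Sum>x\<in>{L..q - L}. diff_mult k P1 x (q - x) * of_int x ^ p)"
      by (rule moment_interval[OF A1]) (auto simp: L_def)
    moreover have "moment (\<lambda>i j. diff_mult k P2 j i) q p
        = (\<Sum>x\<in>{L..q - L}. diff_mult k P2 (q - x) x * of_int x ^ p)"
      by (rule moment_interval) (use A2 in \<open>auto simp: L_def\<close>)
    moreover have "(\<Sum>x\<in>{L..q - L}. D x * of_int x ^ p)
        = (\<Sum>x\<in>{L..q - L}. diff_mult k P1 x (q - x) * of_int x ^ p)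
          - (-1) ^ k * (\<Sum>x\<in>{L..q - L}. diff_mult k P2 (q - x) x * of_int x ^ p)"
      by (simp add: D_def sum_subtractf sum_distrib_left algebra_simps)
    ultimately show "(\<Sum>x\<in>{L..q - L}. D x * of_int x ^ p) = 0"
      using phi_assoc_moment_skew[OF N1 N2 skew assoc1 assoc2, where q=q and p=p] by simp
  qed simp
  moreover have "D x = 0" if "x \<notin> {L..q - L}" for x
  proof -
    from that have "x < A1 \<or> q - x < A1" and "q - x < A2 \<or> x < A2" unfolding L_def by auto
    then show ?thesis unfolding D_def using A1 A2 by auto
  qed
  ultimately have "D i = 0" by blast
  then show ?thesis unfolding D_def q_def by simp
qed

lemma sum_arith_progression: "(\<Sum>l<K. c + of_nat l :: complex) = of_nat K * c + of_nat K * (of_nat K - 1) / 2"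
  by (induction K) (simp_all add: field_simps)

lemma assoc_series_below:
  assumes X: "\<And>s n. 2 \<le> n \<Longrightarrow> X s n = 0" and t: "t + 3 \<le> k"
  shows "assoc_series k X q (int t) = 0"
proof -
  have "assoc_series k X q (int t) = (\<Sum>r\<le>t + 2. fdiff_pow k r / fact r * X (int k - q - 1) (int r - int t - 1))"
    by (rule assoc_series_fdiff_pow[where N=2]) (use X in auto)
  also have "\<dots> = 0" using t by (intro sum.neutral) (auto simp: fdiff_pow_below)
  finally show ?thesis .
qed

lemma assoc_series_k_minus_2:
  assumes X: "\<And>s n. 2 \<le> n \<Longrightarrow> X s n = 0" and k: "2 \<le> k"
  shows "assoc_series k X q (int (k - 2)) = X (int k - q - 1) 1"
proof -
  have "assoc_series k X q (int (k - 2)) = (\<Sum>r\<le>k. fdiff_pow k r / fact r * X (int k - q - 1) (int r - int (k - 2) - 1))"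
    by (rule assoc_series_fdiff_pow[where N=2]) (use X k in auto)
  also have "\<dots> = (\<Sum>r<k. fdiff_pow k r / fact r * X (int k - q - 1) (int r - int (k - 2) - 1))
      + fdiff_pow k k / fact k * X (int k - q - 1) (int k - int (k - 2) - 1)"
    by (simp add: lessThan_Suc_atMost[symmetric])
  also have "(\<Sum>r<k. fdiff_pow k r / fact r * X (int k - q - 1) (int r - int (k - 2) - 1)) = 0"
    by (intro sum.neutral) (auto simp: fdiff_pow_below)
  also have "int k - int (k - 2) - 1 = 1" using k by simp
  finally show ?thesis by (simp add: fdiff_pow_self)
qed

lemma assoc_series_k_minus_1:
  assumes X: "\<And>s n. 2 \<le> n \<Longrightarrow> X s n = 0" and k: "1 \<le> k"
  shows "assoc_series k X q (int (k - 1)) = X (int k - q - 1) 0 + of_nat k / 2 * X (int k - q - 1) 1"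
proof -
  have "assoc_series k X q (int (k - 1)) = (\<Sum>r\<le>Suc k. fdiff_pow k r / fact r * X (int k - q - 1) (int r - int (k - 1) - 1))"
    by (rule assoc_series_fdiff_pow[where N=2]) (use X k in auto)
  also have "\<dots> = (\<Sum>r<k. fdiff_pow k r / fact r * X (int k - q - 1) (int r - int (k - 1) - 1))
      + fdiff_pow k k / fact k * X (int k - q - 1) (int k - int (k - 1) - 1)
      + fdiff_pow k (Suc k) / fact (Suc k) * X (int k - q - 1) (int (Suc k) - int (k - 1) - 1)"
    by (simp add: lessThan_Suc_atMost[symmetric])
  also have "(\<Sum>r<k. fdiff_pow k r / fact r * X (int k - q - 1) (int r - int (k - 1) - 1)) = 0"
    by (intro sum.neutral) (auto simp: fdiff_pow_below)
  also have "int k - int (k - 1) - 1 = 0" using k by simp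
  also have "int (Suc k) - int (k - 1) - 1 = 1" using k by simp
  finally show ?thesis by (simp add: fdiff_pow_self fdiff_pow_Suc_self del: fact_Suc)
qed

lemma phi_assoc_gbinomial_moment:
  fixes P X :: "int \<Rightarrow> int \<Rightarrow> complex"
  assumes k: "2 \<le> k" and assoc: "phi_assoc k P X" and X: "\<And>s n. 2 \<le> n \<Longrightarrow> X s n = 0"
    and A: "\<And>i j. i < A \<or> j < A \<Longrightarrow> diff_mult k P i j = 0" and "L \<le> A" and "q - A \<le> U"
  shows "(\<Sum>x\<in>{L..U}. diff_mult k P x (q - x) * ((of_int x - c) gchoose (k - 1)))
    = X (int k - q - 1) 0 + (1 - c) * X (int k - q - 1) 1"
proof -
  have moment: "moment (diff_mult k P) q p = fact p * assoc_series k X q (int p)" for p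
    using assoc unfolding phi_assoc_def by blast
  define f where "f x = diff_mult k P x (q - x)" for x
  define K where "K = k - 1"
  have K_pos: "1 \<le> K" using k unfolding K_def by simp
  have moments: "(\<Sum>x\<in>{L..U}. f x * of_int x ^ t) = fact t * assoc_series k X q (int t)" for t
    using moment_interval[OF A \<open>L \<le> A\<close> \<open>q - A \<le> U\<close>, where p=t] moment[of t] unfolding f_def by simp
  have "(\<Sum>x\<in>{L..U}. f x * ((of_int x - c) gchoose K))
      = ((\<Sum>x\<in>{L..U}. f x * of_int x ^ K)
        - (\<Sum>l<K. c + of_nat l) * (\<Sum>x\<in>{L..U}. f x * of_int x ^ (K - 1))) / fact K"
  proof (rule sum_mult_gbinomial[OF K_pos])
    fix t assume "t + 1 < K"
    then have "t + 3 \<le> k" unfolding K_def by simp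
    then show "(\<Sum>x\<in>{L..U}. f x * of_int x ^ t) = 0" by (simp add: moments assoc_series_below[OF X])
  qed
  also have "(\<Sum>x\<in>{L..U}. f x * of_int x ^ K) = fact K * (X (int k - q - 1) 0 + of_nat k / 2 * X (int k - q - 1) 1)"
  proof -
    have "1 \<le> k" using k by simp
    from assoc_series_k_minus_1[OF X this] show ?thesis unfolding moments K_def by simp
  qed
  also have "(\<Sum>x\<in>{L..U}. f x * of_int x ^ (K - 1)) = fact (K - 1) * X (int k - q - 1) 1"
  proof -
    have "assoc_series k X q (int (k - 2)) = X (int k - q - 1) 1"
      by (rule assoc_series_k_minus_2[OF X k])
    moreover have "K - 1 = k - 2" unfolding K_def by simp
    ultimately show ?thesis unfolding moments by simp
  qed
  also have "(\<Sum>l<K. c + of_nat l) = of_nat K * c + of_nat K * (of_nat K - 1) / 2"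
    by (rule sum_arith_progression)
  also have "fact K = of_nat K * (fact (K - 1) :: complex)"
    using K_pos by (metis fact_nonzero fact_num_eq_if of_nat_eq_0_iff not_one_le_zero)
  also have "(of_nat k :: complex) = of_nat K + 1"
    unfolding K_def using k by (simp add: of_nat_diff)
  finally have "(\<Sum>x\<in>{L..U}. f x * ((of_int x - c) gchoose K))
      = (of_nat K * fact (K - 1) * (X (int k - q - 1) 0 + (of_nat K + 1) / 2 * X (int k - q - 1) 1)
        - (of_nat K * c + of_nat K * (of_nat K - 1) / 2) * (fact (K - 1) * X (int k - q - 1) 1))
        / (of_nat K * fact (K - 1))" .
  also have "\<dots> = X (int k - q - 1) 0 + (1 - c) * X (int k - q - 1) 1"
    using K_pos by (simp add: field_simps)
  finally show ?thesis
    unfolding f_def K_def[symmetric] .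
qed

lemma phi_assoc_commutator:
  fixes P1 P2 X :: "int \<Rightarrow> int \<Rightarrow> complex"
  assumes k: "2 \<le> k"
    and trunc1: "\<And>i j. j < B \<Longrightarrow> P1 i j = 0" and trunc2: "\<And>i j. j < B \<Longrightarrow> P2 i j = 0"
    and local: "\<And>i j. diff_mult k P1 i j = (-1) ^ k * diff_mult k P2 j i"
    and assoc: "phi_assoc k P1 X" and X: "\<And>s n. 2 \<le> n \<Longrightarrow> X s n = 0"
  shows "P1 i j - P2 j i = X (- i - j - 1) 0 - of_int i * X (- i - j - 1) 1"
proof -
  obtain A where A: "\<And>i j. i < A \<or> j < A \<Longrightarrow> diff_mult k P1 i j = 0"
    using assoc unfolding phi_assoc_def by blast
  define q L U where "q = i + j + int k" and "L = min (min A B) i"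
    and "U = max (max (q - A) (q - B)) (i + int k)"
  have "P1 i j - P2 j i = (\<Sum>x\<in>{L..U}. diff_mult k P1 x (q - x) * (of_int (x - i - 1) gchoose (k - 1)))"
    unfolding q_def
    by (rule commutator_of_local[OF _ trunc1 trunc2 local]) (use k in \<open>auto simp: L_def U_def q_def\<close>)
  also have "\<dots> = (\<Sum>x\<in>{L..U}. diff_mult k P1 x (q - x) * ((of_int x - (of_int i + 1)) gchoose (k - 1)))"
    by (simp add: algebra_simps)
  also have "\<dots> = X (int k - q - 1) 0 + (1 - (of_int i + 1)) * X (int k - q - 1) 1"
    by (rule phi_assoc_gbinomial_moment[OF k assoc X A]) (auto simp: L_def U_def)
  finally show ?thesis by (simp add: q_def)
qed

lemma phi_assoc_mono:
  assumes N: "\<And>s n. N \<le> n \<Longrightarrow> X s n = 0" and g: "phi_assoc k P X" and kk: "k \<le> k'"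
  shows "phi_assoc k' P X"
  using kk
proof (induction k' rule: dec_induct)
  case base then show ?case by (rule g)
next
  case (step m) then show ?case using phi_assoc_Suc[where N=N and X=X, OF N] by blast
qed

section \<open>Coefficients of a \<open>\<phi>\<close>-coordinated module\<close>

lemma linearD:
  assumes "Vector_Spaces.linear s1 s2 f"
  shows "f (x + y) = f x + f y" "f (s1 c x) = s2 c (f x)" "f 0 = 0" "f (x - y) = f x - f y"
    "f (sum g A) = (\<Sum>a\<in>A. f (g a))" "f (- x) = - f x"
proof -
  interpret module_hom s1 s2 f using assms by (simp add: module_hom_iff_linear)
  show "f (x + y) = f x + f y" by (rule add)
  show "f (s1 c x) = s2 c (f x)" by (rule scale)
  show "f 0 = 0" by (rule zero)
  show "f (x - y) = f x - f y" by (rule diff)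
  show "f (sum g A) = (\<Sum>a\<in>A. f (g a))" by (rule sum)
  show "f (- x) = - f x" by (rule neg)
qed

locale coefficient_functional =
  fixes scV :: "complex \<Rightarrow> 'v::ab_group_add \<Rightarrow> 'v" and vac :: 'v and Y :: "'v \<Rightarrow> int \<Rightarrow> 'v \<Rightarrow> 'v"
    and scW :: "complex \<Rightarrow> 'w::ab_group_add \<Rightarrow> 'w" and YW :: "'v \<Rightarrow> int \<Rightarrow> 'w \<Rightarrow> 'w"
    and \<phi> :: "'w \<Rightarrow> complex" and w :: 'w
  assumes VA: "vertex_algebra scV vac Y" and MOD: "phi_coord_module scV vac Y scW YW"
    and LIN: "Vector_Spaces.linear scW (*) \<phi>"
begin

text \<open>Coefficients of \<open>x\<^sub>1\<^sup>i x\<^sub>2\<^sup>j\<close> in \<open>\<phi>(Y\<^sub>W(u, x\<^sub>1) Y\<^sub>W(v, x\<^sub>2) w)\<close> and of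
  \<open>x\<^sub>2\<^sup>-\<^sup>s\<^sup>-\<^sup>1 z\<^sup>-\<^sup>n\<^sup>-\<^sup>1\<close> in \<open>\<phi>(Y\<^sub>W(Y(u, z) v, x\<^sub>2) w)\<close>.\<close>

definition pair_coeff :: "'v \<Rightarrow> 'v \<Rightarrow> int \<Rightarrow> int \<Rightarrow> complex" where
  "pair_coeff u v i j = \<phi> (YW u (- i - 1) (YW v (- j - 1) w))"

definition iterate_coeff :: "'v \<Rightarrow> 'v \<Rightarrow> int \<Rightarrow> int \<Rightarrow> complex" where
  "iterate_coeff u v s n = \<phi> (YW (Y u n v) s w)"

lemma V_vector_space: "vector_space scV" using VA unfolding vertex_algebra_def by blast
lemma Y_linear: "Vector_Spaces.linear scV scV (Y u n)" using VA unfolding vertex_algebra_def by blast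
lemma Y_trunc: "\<exists>N. \<forall>n\<ge>N. Y u n v = 0" using VA unfolding vertex_algebra_def by blast
lemma Y_vacuum_nonneg: "n \<ge> 0 \<Longrightarrow> Y u n vac = 0" using VA unfolding vertex_algebra_def by blast
lemma Y_creation: "Y u (-1) vac = u" using VA unfolding vertex_algebra_def by blast
lemma borcherds: "(\<Sum>i\<in>{i::nat. Y u (l + int i) v \<noteq> 0}.
            scV ((of_int m :: complex) gchoose i) (Y (Y u (l + int i) v) (m + n - int i) x))
        = (\<Sum>i\<in>{i::nat. Y v (n + int i) x \<noteq> 0}.
            scV ((-1) ^ i * ((of_int l :: complex) gchoose i)) (Y u (l + m - int i) (Y v (n + int i) x)))
        - (\<Sum>i\<in>{i::nat. Y u (m + int i) x \<noteq> 0}.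
            scV ((-1) ^ i * ((of_int l :: complex) gchoose i) * ((-1) powi l))
               (Y v (l + n - int i) (Y u (m + int i) x)))"
  using VA unfolding vertex_algebra_def by blast

lemma YW_linear_left: "Vector_Spaces.linear scV scW (\<lambda>v. YW v n x)" using MOD unfolding phi_coord_module_def by blast
lemma YW_linear: "Vector_Spaces.linear scW scW (YW v n)" using MOD unfolding phi_coord_module_def by blast
lemma YW_trunc: "\<exists>N. \<forall>n\<ge>N. YW v n x = 0" using MOD unfolding phi_coord_module_def by blast
lemma YW_vacuum: "YW vac n x = (if n = -1 then x else 0)" using MOD unfolding phi_coord_module_def by blast
lemma phi_coord_pair: "\<exists>k::nat.
        (\<forall>x. \<exists>A B. \<forall>i j. i < A \<or> j < B \<longrightarrow> prod_coeff scW YW u v k x i j = 0) \<and>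
        (\<forall>x q p. assoc_coeff scW Y YW u v k x q p = subst_coeff scW YW u v k x q p)"
  using MOD unfolding phi_coord_module_def by blast

lemma Y_zero: "Y u n 0 = 0" using linearD(3)[OF Y_linear] .
lemma YW_zero: "YW u n 0 = 0" using linearD(3)[OF YW_linear] .
lemma YW_zero_left: "YW 0 n x = 0" using linearD(3)[OF YW_linear_left[of n x]] .
lemma phi_zero: "\<phi> 0 = 0" using linearD(3)[OF LIN] .

sublocale V: vector_space scV by (rule V_vector_space)

lemma pair_coeff_trunc: "\<exists>B. \<forall>i j. j < B \<longrightarrow> pair_coeff u v i j = 0"
proof -
  obtain N where N: "\<forall>n\<ge>N. YW v n w = 0" using YW_trunc by blast
  show ?thesis
  proof (intro exI allI impI)
    fix i j assume "j < - N"
    then show "pair_coeff u v i j = 0" using N unfolding pair_coeff_def by (simp add: YW_zero phi_zero)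
  qed
qed

lemma diff_mult_pair_coeff: "diff_mult k (pair_coeff u v) i j = \<phi> (prod_coeff scW YW u v k w i j)"
proof -
  have "\<phi> (prod_coeff scW YW u v k w i j) = (\<Sum>p\<in>{0..k}. of_nat (k choose p) * (-1) ^ p *
        \<phi> (YW u (int k - int p - i - 1) (YW v (int p - j - 1) w)))"
    unfolding prod_coeff_def by (simp add: linearD(2,5)[OF LIN])
  also have "\<dots> = diff_mult k (pair_coeff u v) i j"
    unfolding diff_mult_def pair_coeff_def atLeast0AtMost by (intro sum.cong refl) (simp add: algebra_simps)
  finally show ?thesis ..
qed

lemma phi_assoc_coeff: "\<phi> (assoc_coeff scW Y YW u v k w q p) = assoc_series k (iterate_coeff u v) q p"
proof -
  obtain N where N: "\<forall>n\<ge>N. Y u n v = 0" using Y_trunc by blast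
  define SV where "SV = {r::nat. Y u (int r - p - 1) v \<noteq> 0}"
  define SX where "SX = {r::nat. iterate_coeff u v (int k - q - 1) (int r - p - 1) \<noteq> 0}"
  define g where "g j r = of_nat j ^ r / fact r * iterate_coeff u v (int k - q - 1) (int r - p - 1)" for j r
  have "SV \<subseteq> {..nat (\<bar>N\<bar> + \<bar>p\<bar>)}"
  proof
    fix r assume "r \<in> SV"
    then have "\<not> N \<le> int r - p - 1" using N unfolding SV_def by auto
    then show "r \<in> {..nat (\<bar>N\<bar> + \<bar>p\<bar>)}" by auto
  qed
  then have "finite SV" by (rule finite_subset) simp
  moreover have "SX \<subseteq> SV" unfolding SX_def SV_def iterate_coeff_def by (auto simp: YW_zero_left phi_zero)
  ultimately have "(\<Sum>r\<in>SV. g j r) = (\<Sum>r\<in>SX. g j r)" for j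
    by (intro sum.mono_neutral_right) (auto simp: SX_def g_def)
  moreover have "\<phi> (assoc_coeff scW Y YW u v k w q p)
      = (\<Sum>j\<in>{0..k}. of_nat (k choose j) * (-1) ^ (k - j) * (\<Sum>r\<in>SV. g j r))"
    unfolding assoc_coeff_def iterate_coeff_def SV_def g_def
    by (simp add: linearD(2,5)[OF LIN] sum_distrib_left mult_ac)
  ultimately show ?thesis
    unfolding assoc_series_def fdiff_def exp_coeff_def SX_def g_def atLeast0AtMost by simp
qed

lemma phi_subst_coeff:
  assumes bound: "\<And>i j. i < A \<or> j < A \<Longrightarrow> prod_coeff scW YW u v k w i j = 0"
  shows "\<phi> (subst_coeff scW YW u v k w q (int p)) = moment (diff_mult k (pair_coeff u v)) q p / fact p"
proof -
  define SW where "SW = {i. prod_coeff scW YW u v k w i (q - i) \<noteq> 0}"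
  define SM where "SM = {i. diff_mult k (pair_coeff u v) i (q - i) \<noteq> 0}"
  have "SW \<subseteq> {A..q - A}"
    using bound unfolding SW_def by (auto simp: not_less[symmetric])
  then have "finite SW" by (rule finite_subset) simp
  moreover have "SM \<subseteq> SW" unfolding SM_def SW_def by (auto simp: diff_mult_pair_coeff phi_zero)
  ultimately have "(\<Sum>i\<in>SW. of_int i ^ p / fact p * \<phi> (prod_coeff scW YW u v k w i (q - i)))
      = (\<Sum>i\<in>SM. of_int i ^ p / fact p * diff_mult k (pair_coeff u v) i (q - i))"
    unfolding diff_mult_pair_coeff by (intro sum.mono_neutral_right) (auto simp: SM_def diff_mult_pair_coeff)
  then show ?thesis
    unfolding subst_coeff_def SW_def moment_def SM_def
    by (simp add: linearD(2,5)[OF LIN] sum_divide_distrib mult_ac)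
qed

lemma phi_assoc_pair_coeff: "\<exists>k. phi_assoc k (pair_coeff u v) (iterate_coeff u v)"
proof -
  obtain k where bounded: "\<forall>x. \<exists>A B. \<forall>i j. i < A \<or> j < B \<longrightarrow> prod_coeff scW YW u v k x i j = 0"
    and assoc: "\<forall>x q p. assoc_coeff scW Y YW u v k x q p = subst_coeff scW YW u v k x q p"
    using phi_coord_pair by blast
  obtain A B where AB: "\<forall>i j. i < A \<or> j < B \<longrightarrow> prod_coeff scW YW u v k w i j = 0"
    using bounded by blast
  then have bound: "prod_coeff scW YW u v k w i j = 0" if "i < min A B \<or> j < min A B" for i j
    using that by auto
  have assoc': "assoc_series k (iterate_coeff u v) q p = \<phi> (subst_coeff scW YW u v k w q p)" for q p
    using assoc phi_assoc_coeff by metis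
  have "diff_mult k (pair_coeff u v) i j = 0" if "i < min A B \<or> j < min A B" for i j
    using bound[OF that] by (simp add: diff_mult_pair_coeff phi_zero)
  moreover have "moment (diff_mult k (pair_coeff u v)) q p = fact p * assoc_series k (iterate_coeff u v) q (int p)"
    for q p
    using phi_subst_coeff[where A="min A B", OF bound, of q p] by (simp add: assoc')
  moreover have "assoc_series k (iterate_coeff u v) q p = 0" if "p < 0" for q p
    unfolding assoc' using that by (simp add: subst_coeff_def phi_zero)
  ultimately have "phi_assoc k (pair_coeff u v) (iterate_coeff u v)"
    unfolding phi_assoc_def by blast
  then show ?thesis ..
qed

lemma diff_mult_pair_coeff_vacuum:
  "diff_mult k (pair_coeff c vac) i j = (if 0 \<le> j \<and> j \<le> int k
     then of_nat (k choose nat j) * (-1) ^ nat j * \<phi> (YW c (int k - j - i - 1) w) else 0)"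
proof -
  have "pair_coeff c vac i j = (if j = 0 then \<phi> (YW c (- i - 1) w) else 0)" for i j
    unfolding pair_coeff_def by (simp add: YW_vacuum YW_zero phi_zero)
  then have "diff_mult k (pair_coeff c vac) i j = (\<Sum>p\<le>k. if p = nat j \<and> 0 \<le> j
      then of_nat (k choose p) * (-1) ^ p * \<phi> (YW c (int k - j - i - 1) w) else 0)"
    unfolding diff_mult_def by (intro sum.cong refl) (auto simp: algebra_simps)
  then show ?thesis
    by (cases "0 \<le> j") (auto simp: sum.delta nat_le_iff)
qed

lemma moment_pair_coeff_vacuum:
  "moment (diff_mult k (pair_coeff c vac)) q p
     = fdiff k (\<lambda>l. (of_int q - of_nat k + of_nat l) ^ p) * \<phi> (YW c (int k - q - 1) w)"
proof -
  define F where "F = diff_mult k (pair_coeff c vac)"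
  have "{i. F i (q - i) \<noteq> 0} \<subseteq> {q - int k..q}"
    by (auto simp: F_def diff_mult_pair_coeff_vacuum split: if_splits)
  then have "moment F q p = (\<Sum>i\<in>{q - int k..q}. F i (q - i) * of_int i ^ p)"
    unfolding moment_def by (intro sum.mono_neutral_left) auto
  also have "\<dots> = (\<Sum>l\<le>k. F (q - int k + int l) (int k - int l) * of_int (q - int k + int l) ^ p)"
    by (subst sum_int_interval_up) (auto simp: algebra_simps)
  also have "\<dots> = (\<Sum>l\<le>k. of_nat (k choose l) * (-1) ^ (k - l)
      * ((of_int q - of_nat k + of_nat l) ^ p * \<phi> (YW c (int k - q - 1) w)))"
  proof (intro sum.cong refl)
    fix l assume l: "l \<in> {..k}"
    then have "nat (int k - int l) = k - l" and "k choose (k - l) = k choose l"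
      using binomial_symmetric[of l k] by auto
    then show "F (q - int k + int l) (int k - int l) * of_int (q - int k + int l) ^ p
        = of_nat (k choose l) * (-1) ^ (k - l) * ((of_int q - of_nat k + of_nat l) ^ p * \<phi> (YW c (int k - q - 1) w))"
      using l unfolding F_def diff_mult_pair_coeff_vacuum by (simp add: algebra_simps)
  qed
  finally show ?thesis
    unfolding F_def fdiff_def by (simp add: sum_distrib_right mult.assoc)
qed

text \<open>The \<open>D\<close>-derivative property \<open>Y\<^sub>W(D\<^sup>(\<^sup>j\<^sup>) c, x) = (1/j!) (x d/dx)\<^sup>j Y\<^sub>W(c, x)\<close>: associativity
  with the vacuum determines these coefficients because convolution with \<open>fdiff_pow k\<close> is
  invertible.\<close>

lemma iterate_coeff_vacuum_derivative:
  "\<phi> (YW (Y c (- int j - 1) vac) s w) = (- (of_int s + 1)) ^ j / fact j * \<phi> (YW c s w)"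
proof -
  obtain k where "phi_assoc k (pair_coeff c vac) (iterate_coeff c vac)"
    using phi_assoc_pair_coeff by blast
  then have moment: "moment (diff_mult k (pair_coeff c vac)) q p
      = fact p * assoc_series k (iterate_coeff c vac) q (int p)" for q p
    unfolding phi_assoc_def by blast
  define q where "q = int k - s - 1"
  define mu where "mu = - (of_int s + 1 :: complex)"
  define d where "d j = iterate_coeff c vac s (- int j - 1) - mu ^ j / fact j * \<phi> (YW c s w)" for j
  have "(\<Sum>r\<le>p. fdiff_pow k r / fact r * d (p - r)) = 0" for p
  proof -
    have "assoc_series k (iterate_coeff c vac) q (int p)
        = (\<Sum>r\<le>p. fdiff_pow k r / fact r * iterate_coeff c vac (int k - q - 1) (int r - int p - 1))"
      by (rule assoc_series_fdiff_pow[where N=0])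
        (auto simp: iterate_coeff_def Y_vacuum_nonneg YW_zero_left phi_zero)
    also have "\<dots> = (\<Sum>r\<le>p. fdiff_pow k r / fact r * iterate_coeff c vac s (- int (p - r) - 1))"
      by (intro sum.cong refl) (auto simp: q_def of_nat_diff)
    finally have iterate: "(\<Sum>r\<le>p. fdiff_pow k r / fact r * iterate_coeff c vac s (- int (p - r) - 1))
        = moment (diff_mult k (pair_coeff c vac)) q p / fact p"
      using moment[of q p] by simp
    have "(\<Sum>r\<le>p. fdiff_pow k r / fact r * (mu ^ (p - r) / fact (p - r) * \<phi> (YW c s w)))
        = (\<Sum>r\<le>p. fdiff_pow k r / fact r * (mu ^ (p - r) / fact (p - r))) * \<phi> (YW c s w)"
      by (simp add: sum_distrib_right mult.assoc)
    also have "\<dots> = moment (diff_mult k (pair_coeff c vac)) q p / fact p"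
      unfolding fdiff_pow_exp_convolution moment_pair_coeff_vacuum
      by (simp add: q_def mu_def add_ac)
    finally show ?thesis
      unfolding d_def using iterate by (simp add: right_diff_distrib sum_subtractf)
  qed
  then have "d j = 0" by (rule fdiff_pow_convolution_eq_0)
  then show ?thesis unfolding d_def mu_def iterate_coeff_def by simp
qed

lemma vertex_skew_symmetry:
  "Y a n b = - scV ((-1) powi n) (\<Sum>i\<in>{i::nat. Y b (n + int i) a \<noteq> 0}.
      scV ((-1) ^ i) (Y (Y b (n + int i) a) (- int i - 1) vac))"
proof -
  have borch: "(\<Sum>i\<in>{i::nat. Y b (n + int i) a \<noteq> 0}.
            scV ((of_int (-1) :: complex) gchoose i) (Y (Y b (n + int i) a) (-1 + 0 - int i) vac))
        = (\<Sum>i\<in>{i::nat. Y a (0 + int i) vac \<noteq> 0}.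
            scV ((-1) ^ i * ((of_int n :: complex) gchoose i)) (Y b (n + -1 - int i) (Y a (0 + int i) vac)))
        - (\<Sum>i\<in>{i::nat. Y b (-1 + int i) vac \<noteq> 0}.
            scV ((-1) ^ i * ((of_int n :: complex) gchoose i) * ((-1) powi n))
               (Y a (n + 0 - int i) (Y b (-1 + int i) vac)))"
    by (rule borcherds)
  have "{i::nat. Y a (0 + int i) vac \<noteq> 0} = {}"
    by (auto simp: Y_vacuum_nonneg)
  moreover have "{i::nat. Y b (-1 + int i) vac \<noteq> 0} \<subseteq> {0}"
  proof
    fix i :: nat assume "i \<in> {i. Y b (-1 + int i) vac \<noteq> 0}"
    then show "i \<in> {0}" using Y_vacuum_nonneg[of "-1 + int i" b] by (cases i) auto
  qed
  then have "(\<Sum>i\<in>{i::nat. Y b (-1 + int i) vac \<noteq> 0}.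
            scV ((-1) ^ i * ((of_int n :: complex) gchoose i) * ((-1) powi n))
               (Y a (n + 0 - int i) (Y b (-1 + int i) vac)))
      = (\<Sum>i\<in>{0}. scV ((-1) ^ i * ((of_int n :: complex) gchoose i) * ((-1) powi n))
               (Y a (n + 0 - int i) (Y b (-1 + int i) vac)))"
    by (intro sum.mono_neutral_left) (auto simp: Y_creation Y_zero)
  moreover have "(of_int (-1) :: complex) gchoose i = (-1) ^ i" for i
    using gbinomial_minus[of "1 :: complex" i] by (simp add: binomial_gbinomial[symmetric])
  ultimately have "(\<Sum>i\<in>{i::nat. Y b (n + int i) a \<noteq> 0}.
      scV ((-1) ^ i) (Y (Y b (n + int i) a) (-1 - int i) vac)) = - scV ((-1) powi n) (Y a n b)"
    using borch by (simp add: Y_creation algebra_simps)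
  moreover have "- int i - 1 = -1 - int i" for i :: nat by simp
  ultimately show ?thesis by (simp only:) (simp add: V.scale_minus_right)
qed

lemma iterate_coeff_skew:
  assumes N: "\<And>m. N \<le> m \<Longrightarrow> Y b m a = 0" and J: "N \<le> n + int J"
  shows "iterate_coeff a b s n
    = - ((-1) powi n) * (\<Sum>j\<le>J. (of_int s + 1) ^ j / fact j * iterate_coeff b a s (n + int j))"
proof -
  define S where "S = {i::nat. Y b (n + int i) a \<noteq> 0}"
  have S: "S \<subseteq> {..J}"
  proof
    fix i assume "i \<in> S"
    then have "\<not> N \<le> n + int i" using N unfolding S_def by auto
    then show "i \<in> {..J}" using J by auto
  qed
  have summand: "(-1) ^ i * \<phi> (YW (Y (Y b (n + int i) a) (- int i - 1) vac) s w)
      = (of_int s + 1) ^ i / fact i * iterate_coeff b a s (n + int i)" for i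
  proof -
    have "(-1) ^ i * (- (of_int s + 1)) ^ i = ((of_int s + 1) ^ i :: complex)"
      by (simp add: add.commute flip: power_mult_distrib)
    moreover have "(-1) ^ i * ((- (of_int s + 1)) ^ i / fact i * \<phi> (YW (Y b (n + int i) a) s w))
        = ((-1) ^ i * (- (of_int s + 1)) ^ i) / fact i * \<phi> (YW (Y b (n + int i) a) s w)"
      by (simp add: field_simps)
    ultimately show ?thesis
      unfolding iterate_coeff_vacuum_derivative iterate_coeff_def by simp
  qed
  have "iterate_coeff a b s n
      = - ((-1) powi n) * (\<Sum>i\<in>S. (-1) ^ i * \<phi> (YW (Y (Y b (n + int i) a) (- int i - 1) vac) s w))"
    unfolding iterate_coeff_def S_def
    by (subst vertex_skew_symmetry) (simp add: linearD(2,5,6)[OF YW_linear_left] linearD(2,5,6)[OF LIN])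
  also have "\<dots> = - ((-1) powi n) * (\<Sum>i\<in>S. (of_int s + 1) ^ i / fact i * iterate_coeff b a s (n + int i))"
    using summand by simp
  also have "\<dots> = - ((-1) powi n) * (\<Sum>j\<le>J. (of_int s + 1) ^ j / fact j * iterate_coeff b a s (n + int j))"
    using S by (subst sum.mono_neutral_left) (auto simp: S_def iterate_coeff_def YW_zero_left phi_zero)
  finally show ?thesis .
qed

lemma pair_coeff_local:
  obtains K where "2 \<le> K" and "phi_assoc K (pair_coeff a b) (iterate_coeff a b)"
    and "\<And>i j. diff_mult K (pair_coeff a b) i j = (-1) ^ K * diff_mult K (pair_coeff b a) j i"
proof -
  obtain k1 where k1: "phi_assoc k1 (pair_coeff a b) (iterate_coeff a b)" using phi_assoc_pair_coeff by blast
  obtain k2 where k2: "phi_assoc k2 (pair_coeff b a) (iterate_coeff b a)" using phi_assoc_pair_coeff by blast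
  obtain Na Nb where "\<forall>n\<ge>Na. Y a n b = 0" and "\<forall>n\<ge>Nb. Y b n a = 0" using Y_trunc by meson
  then obtain N where Ya: "\<And>n. N \<le> n \<Longrightarrow> Y a n b = 0" and Yb: "\<And>n. N \<le> n \<Longrightarrow> Y b n a = 0"
    by (metis max.boundedE)
  have Xa: "iterate_coeff a b s n = 0" and Xb: "iterate_coeff b a s n = 0" if "N \<le> n" for s n
    using Ya[OF that] Yb[OF that] unfolding iterate_coeff_def by (simp_all add: YW_zero_left phi_zero)
  define K where "K = max (max k1 k2) 2"
  have Ka: "phi_assoc K (pair_coeff a b) (iterate_coeff a b)"
    by (rule phi_assoc_mono[OF Xa k1]) (simp_all add: K_def)
  have Kb: "phi_assoc K (pair_coeff b a) (iterate_coeff b a)"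
    by (rule phi_assoc_mono[OF Xb k2]) (simp_all add: K_def)
  have "diff_mult K (pair_coeff a b) i j = (-1) ^ K * diff_mult K (pair_coeff b a) j i" for i j
    by (rule phi_assoc_locality[OF Xa Xb iterate_coeff_skew[OF Yb] Ka Kb])
  moreover have "2 \<le> K" by (simp add: K_def)
  ultimately show thesis using that Ka by blast
qed

lemma pair_coeff_commutator:
  assumes high: "\<And>n. 2 \<le> n \<Longrightarrow> Y a n b = 0"
  shows "pair_coeff a b i j - pair_coeff b a j i
    = iterate_coeff a b (- i - j - 1) 0 - of_int i * iterate_coeff a b (- i - j - 1) 1"
proof -
  obtain K where "2 \<le> K" and assoc: "phi_assoc K (pair_coeff a b) (iterate_coeff a b)"
    and local: "\<And>i j. diff_mult K (pair_coeff a b) i j = (-1) ^ K * diff_mult K (pair_coeff b a) j i"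
    by (rule pair_coeff_local[of a b]) blast
  obtain B1 B2 where "\<forall>i j. j < B1 \<longrightarrow> pair_coeff a b i j = 0" and "\<forall>i j. j < B2 \<longrightarrow> pair_coeff b a i j = 0"
    using pair_coeff_trunc by meson
  then show ?thesis
    by (intro phi_assoc_commutator[where B="min B1 B2", OF \<open>2 \<le> K\<close> _ _ local assoc])
      (auto simp: iterate_coeff_def high YW_zero_left phi_zero)
qed

end

section \<open>The commutator formula in \<open>W\<close>\<close>

lemma complex_vector_space: "vector_space ((*) :: complex \<Rightarrow> complex \<Rightarrow> complex)"
  by unfold_locales (auto simp: algebra_simps)

lemma eq_if_functionals_agree:
  fixes scW :: "complex \<Rightarrow> 'w::ab_group_add \<Rightarrow> 'w"
  assumes VS: "vector_space scW" and agree: "\<And>\<phi>. Vector_Spaces.linear scW (*) \<phi> \<Longrightarrow> \<phi> x = \<phi> y"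
  shows "x = y"
proof (rule ccontr)
  assume "x \<noteq> y"
  interpret vector_space_pair scW "(*) :: complex \<Rightarrow> complex \<Rightarrow> complex"
    using VS complex_vector_space by (simp add: vector_space_pair_def)
  have "vs1.independent {x - y}" using \<open>x \<noteq> y\<close> by simp
  then obtain \<phi> where \<phi>: "Vector_Spaces.linear scW (*) \<phi>" "\<phi> (x - y) = 1"
    using linear_independent_extend[of "{x - y}" "\<lambda>_. 1"] by auto
  then show False using agree[OF \<phi>(1)] by (simp add: linear_diff)
qed

lemma YW_vacuum_derivative:
  assumes VA: "vertex_algebra scV vac Y" and MOD: "phi_coord_module scV vac Y scW YW"
  shows "YW (Y c (- int j - 1) vac) s x = scW ((- (of_int s + 1)) ^ j / fact j) (YW c s x)"
proof (rule eq_if_functionals_agree)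
  show "vector_space scW" using MOD unfolding phi_coord_module_def by blast
  fix \<phi> assume "Vector_Spaces.linear scW (*) \<phi>"
  then interpret coefficient_functional scV vac Y scW YW \<phi> x
    by (simp add: coefficient_functional_def VA MOD)
  show "\<phi> (YW (Y c (- int j - 1) vac) s x) = \<phi> (scW ((- (of_int s + 1)) ^ j / fact j) (YW c s x))"
    by (simp add: iterate_coeff_vacuum_derivative linearD(2)[OF LIN])
qed

lemma YW_commutator:
  assumes VA: "vertex_algebra scV vac Y" and MOD: "phi_coord_module scV vac Y scW YW"
    and high: "\<And>j. 2 \<le> j \<Longrightarrow> Y a j b = 0"
  shows "YW a (n - 1) (YW b (s - 1) x) - YW b (s - 1) (YW a (n - 1) x)
       = YW (Y a 0 b) (n + s - 1) x + scW (of_int n) (YW (Y a 1 b) (n + s - 1) x)"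
proof (rule eq_if_functionals_agree)
  show "vector_space scW" using MOD unfolding phi_coord_module_def by blast
  fix \<phi> assume "Vector_Spaces.linear scW (*) \<phi>"
  then interpret coefficient_functional scV vac Y scW YW \<phi> x
    by (simp add: coefficient_functional_def VA MOD)
  have "pair_coeff a b (- n) (- s) - pair_coeff b a (- s) (- n)
      = iterate_coeff a b (n + s - 1) 0 + of_int n * iterate_coeff a b (n + s - 1) 1"
    using pair_coeff_commutator[OF high, of "- n" "- s"] by simp
  then show "\<phi> (YW a (n - 1) (YW b (s - 1) x) - YW b (s - 1) (YW a (n - 1) x))
      = \<phi> (YW (Y a 0 b) (n + s - 1) x + scW (of_int n) (YW (Y a 1 b) (n + s - 1) x))"
    unfolding pair_coeff_def iterate_coeff_def by (simp add: linearD[OF LIN])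
qed

lemma YW_commutator_of_products:
  assumes VA: "vertex_algebra scV vac Y" and MOD: "phi_coord_module scV vac Y scW YW"
    and high: "\<And>j. 2 \<le> j \<Longrightarrow> Y a j b = 0"
    and prod0: "Y a 0 b = scV \<mu> (Y c (-2) vac) + scV \<kappa>\<^sub>0 vac"
    and prod1: "Y a 1 b = scV \<nu> c + scV \<kappa>\<^sub>1 vac"
  shows "YW a (n - 1) (YW b (s - 1) x) - YW b (s - 1) (YW a (n - 1) x)
    = scW (of_int n * \<nu> - \<mu> * of_int (n + s)) (YW c (n + s - 1) x)
      + (if n + s = 0 then scW (\<kappa>\<^sub>0 + of_int n * \<kappa>\<^sub>1) x else 0)"
proof -
  interpret W: vector_space scW using MOD unfolding phi_coord_module_def by blast
  have YW_lin: "Vector_Spaces.linear scV scW (\<lambda>v. YW v (n + s - 1) x)"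
    using MOD unfolding phi_coord_module_def by blast
  have YW_vac: "YW vac (n + s - 1) x = (if n + s = 0 then x else 0)"
    using MOD unfolding phi_coord_module_def by auto
  have "YW (Y a 0 b) (n + s - 1) x = scW \<mu> (YW (Y c (-2) vac) (n + s - 1) x) + scW \<kappa>\<^sub>0 (YW vac (n + s - 1) x)"
    by (simp only: prod0 linearD[OF YW_lin])
  also have "YW (Y c (-2) vac) (n + s - 1) x = scW (- of_int (n + s)) (YW c (n + s - 1) x)"
    using YW_vacuum_derivative[OF VA MOD, of c 1 "n + s - 1" x] by simp
  finally have a0: "YW (Y a 0 b) (n + s - 1) x
      = scW (\<mu> * - of_int (n + s)) (YW c (n + s - 1) x) + (if n + s = 0 then scW \<kappa>\<^sub>0 x else 0)"
    using YW_vac by simp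
  have a1: "YW (Y a 1 b) (n + s - 1) x
      = scW \<nu> (YW c (n + s - 1) x) + (if n + s = 0 then scW \<kappa>\<^sub>1 x else 0)"
    using YW_vac by (simp add: prod1 linearD[OF YW_lin])
  have E: "YW a (n - 1) (YW b (s - 1) x) - YW b (s - 1) (YW a (n - 1) x)
      = scW (\<mu> * - of_int (n + s)) (YW c (n + s - 1) x) + (if n + s = 0 then scW \<kappa>\<^sub>0 x else 0)
        + scW (of_int n) (scW \<nu> (YW c (n + s - 1) x) + (if n + s = 0 then scW \<kappa>\<^sub>1 x else 0))"
    using YW_commutator[OF VA MOD high, of n s x] unfolding a0 a1 .
  show ?thesis
  proof (cases "n + s = 0")
    case True
    with E show ?thesis by (simp add: W.scale_right_distrib W.scale_left_distrib add_ac)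
  next
    case False
    with E have "YW a (n - 1) (YW b (s - 1) x) - YW b (s - 1) (YW a (n - 1) x)
        = scW (\<mu> * - of_int (n + s)) (YW c (n + s - 1) x) + scW (of_int n * \<nu>) (YW c (n + s - 1) x)"
      by simp
    also have "\<dots> = scW (of_int n * \<nu> - \<mu> * of_int (n + s)) (YW c (n + s - 1) x)"
      by (simp add: algebra_simps flip: W.scale_left_distrib)
    finally show ?thesis using False by simp
  qed
qed

lemma YW_commute_of_products_vanish:
  assumes VA: "vertex_algebra scV vac Y" and MOD: "phi_coord_module scV vac Y scW YW"
    and vanish: "\<And>j. 0 \<le> j \<Longrightarrow> Y a j b = 0"
  shows "YW a (n - 1) (YW b (s - 1) x) = YW b (s - 1) (YW a (n - 1) x)"
proof -
  interpret W: vector_space scW using MOD unfolding phi_coord_module_def by blast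
  have "YW 0 k x = 0" for k
    using MOD linearD(3)[of scV scW "\<lambda>v. YW v k x"] unfolding phi_coord_module_def by blast
  then show ?thesis
    using YW_commutator[OF VA MOD, of a b n s x] by (simp add: vanish)
qed

text \<open>For the generators of \<open>\<widehat>{L*}\<close> the bracket determines the products \<open>a\<^sub>j b\<close>; the central
  terms of the result come from the vacuum components of \<open>a\<^sub>0 b\<close> and \<open>a\<^sub>1 b\<close>.\<close>

lemma YW_bracket_of_generators:
  assumes VA: "vertex_algebra scV vac Y" and MOD: "phi_coord_module scV vac Y scW YW"
    and YA: "\<And>n. Y (A m (-1) vac) n = A m n" and YC: "\<And>n. Y (C (m + r) (-1) vac) n = C (m + r) n"
    and bracket: "\<And>n s x. A m n (B r s x) - B r s (A m n x) =
        scV (of_int (n * r - m * s)) (C (m + r) (n + s - 1) x)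
        + scV ((if m + r = 0 \<and> n + s + 1 = 0 then of_int m * la else 0)
              + (if m + r = 0 \<and> n + s = 0 then of_int n * lb else 0)) x"
    and A_vac: "\<And>n. 0 \<le> n \<Longrightarrow> A m n vac = 0" and C_vac: "\<And>n. 0 \<le> n \<Longrightarrow> C (m + r) n vac = 0"
    and B_0: "B r (-1) 0 = 0"
  shows "YW (A m (-1) vac) (n - 1) (YW (B r (-1) vac) (s - 1) x)
           - YW (B r (-1) vac) (s - 1) (YW (A m (-1) vac) (n - 1) x)
       = scW (of_int (n * r - m * s))
           (if (m + r, n + s) = (0, 0) then 0 else YW (C (m + r) (-1) vac) (n + s - 1) x)
         + (if (m + r, n + s) = (0, 0) then scW (of_int m * la + of_int n * lb) x else 0)"
proof -
  interpret V: vector_space scV using VA unfolding vertex_algebra_def by blast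
  interpret W: vector_space scW using MOD unfolding phi_coord_module_def by blast
  define a b c where "a = A m (-1) vac" and "b = B r (-1) vac" and "c = C (m + r) (-1) vac"
  have prod: "Y a j b = scV (of_int (j * r + m)) (C (m + r) (j - 2) vac)
      + scV ((if m + r = 0 \<and> j = 0 then of_int m * la else 0)
             + (if m + r = 0 \<and> j = 1 then lb else 0)) vac" if "0 \<le> j" for j
    using bracket[of j "-1" vac] A_vac[OF that] B_0 unfolding a_def b_def YA by simp
  have "Y a j b = 0" if "2 \<le> j" for j
    using prod[of j] that by (simp add: C_vac)
  moreover have "Y a 0 b = scV (of_int m) (Y c (-2) vac) + scV (if m + r = 0 then of_int m * la else 0) vac"
    using prod[of 0] YC unfolding c_def by simp
  moreover have "Y a 1 b = scV (of_int (r + m)) c + scV (if m + r = 0 then lb else 0) vac"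
    using prod[of 1] YC unfolding c_def by simp
  ultimately have "YW a (n - 1) (YW b (s - 1) x) - YW b (s - 1) (YW a (n - 1) x)
      = scW (of_int n * of_int (r + m) - of_int m * of_int (n + s)) (YW c (n + s - 1) x)
        + (if n + s = 0 then scW ((if m + r = 0 then of_int m * la else 0)
             + of_int n * (if m + r = 0 then lb else 0)) x else 0)"
    by (rule YW_commutator_of_products[OF VA MOD])
  moreover have "of_int n * of_int (r + m) - of_int m * of_int (n + s) = (of_int (n * r - m * s) :: complex)"
    by (simp add: algebra_simps)
  moreover have "(of_int n * of_int r :: complex) = of_int m * of_int s" if "m + r = 0" and "n + s = 0"
  proof -
    from that have "r = - m" and "s = - n" by auto
    then show ?thesis by simp
  qed
  ultimately show ?thesis unfolding a_def b_def c_def by auto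
qed

lemma phi_coord_module_restricted:
  assumes "phi_coord_module scV vac Y scW YW"
  shows "Lstar_restricted (\<lambda>m n. YW (a m) (n - 1)) (\<lambda>m n. YW (b m) (n - 1))"
  unfolding Lstar_restricted_def
proof (intro allI)
  fix m x
  obtain N1 N2 where "\<forall>n\<ge>N1. YW (a m) n x = 0" and "\<forall>n\<ge>N2. YW (b m) n x = 0"
    using assms unfolding phi_coord_module_def by meson
  then show "\<exists>N. \<forall>n\<ge>N. (m, n) \<noteq> (0, 0) \<longrightarrow> YW (a m) (n - 1) x = 0 \<and> YW (b m) (n - 1) x = 0"
    by (intro exI[of _ "max N1 N2 + 1"]) auto
qed

theorem theorem4p6:
  fixes scV :: "complex \<Rightarrow> 'v::ab_group_add \<Rightarrow> 'v" and vac :: 'v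
    and Y :: "'v \<Rightarrow> int \<Rightarrow> 'v \<Rightarrow> 'v"
    and T E :: "int \<Rightarrow> int \<Rightarrow> 'v \<Rightarrow> 'v"
    and l1 l2 l3 l4 :: complex
    and scW :: "complex \<Rightarrow> 'w::ab_group_add \<Rightarrow> 'w"
    and YW :: "'v \<Rightarrow> int \<Rightarrow> 'w \<Rightarrow> 'w"
  assumes "is_VLhat scV vac Y T E l1 l2 l3 l4"
    and "phi_coord_module scV vac Y scW YW"
  shows "Lstar_module scW (\<lambda>m n. YW (T m (-1) vac) (n - 1)) (\<lambda>m n. YW (E m (-1) vac) (n - 1))
           l1 l2 l3 l4
         \<and> Lstar_restricted (\<lambda>m n. YW (T m (-1) vac) (n - 1)) (\<lambda>m n. YW (E m (-1) vac) (n - 1))"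
proof -
  note MOD = assms(2)
  have VA: "vertex_algebra scV vac Y" and LM: "Lhat_module scV T E l1 l2 l3 l4"
    and YT: "\<And>m n. Y (T m (-1) vac) n = T m n" and YE: "\<And>m n. Y (E m (-1) vac) n = E m n"
    and T_vac: "\<And>m n. 0 \<le> n \<Longrightarrow> T m n vac = 0" and E_vac: "\<And>m n. 0 \<le> n \<Longrightarrow> E m n vac = 0"
    using assms(1) unfolding is_VLhat_def induced_from_vacuum_def by auto
  have T_0: "T m n 0 = 0" and E_0: "E m n 0 = 0" for m n
    using LM unfolding Lhat_module_def by (auto intro: linearD(3))
  have "T m j (T r (-1) vac) = 0" if "0 \<le> j" for m r j
    using LM T_vac[OF that] T_0 unfolding Lhat_module_def by (metis eq_iff_diff_eq_0)
  then have "YW (T m (-1) vac) (n - 1) (YW (T r (-1) vac) (s - 1) x)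
      = YW (T r (-1) vac) (s - 1) (YW (T m (-1) vac) (n - 1) x)" for m n r s x
    by (intro YW_commute_of_products_vanish[OF VA MOD]) (simp add: YT)
  moreover note
    YW_bracket_of_generators[where A=T and B=E and C=T and la=l1 and lb=l2,
      OF VA MOD YT YT LM[unfolded Lhat_module_def, THEN conjunct2, THEN conjunct2, THEN conjunct1, rule_format]
      T_vac T_vac E_0]
    YW_bracket_of_generators[where A=E and B=E and C=E and la=l3 and lb=l4,
      OF VA MOD YE YE LM[unfolded Lhat_module_def, THEN conjunct2, THEN conjunct2, THEN conjunct2, rule_format]
      E_vac E_vac E_0]
  moreover have "Vector_Spaces.linear scW scW (YW v n)" for v n
    using MOD unfolding phi_coord_module_def by blast
  ultimately show ?thesis
    using phi_coord_module_restricted[OF MOD]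
    unfolding Lstar_module_def by (auto simp: eq_iff_diff_eq_0[symmetric])
qed

end
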